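(* Let $Z=\mathbb R$ or $Z=\mathbb Z$, and take the KdV dispersion relations $h_1(\xi)=h_2(\xi)=h_3(\xi)=\xi^3$. Let $H,N_1,N_2,N_3,L_1,L_2,L_3>0$ satisfy $$N_{max}\sim N_{med},\qquad L_{max}\sim\max(H,L_{med}),\qquad H\sim N_1N_2N_3 .$$ Write $\mathcal Q:=\|X_{N_1,N_2,N_3;H;L_1,L_2,L_3}\|_{[3;Z\times\mathbb R]}$. Then: (i) (coherent $(++)$ case) if $N_{max}\sim N_{min}$ and $L_{max}\sim H$, then $\mathcal Q\lesssim L_{min}^{1/2}\,\langle N_{max}^{-1/4}L_{med}^{1/4}\rangle_Z$; (ii) (coherent $(+-)$ case) if $N_2\sim N_3\gg N_1$ and $H\sim L_1\gtrsim L_2,L_3$, then $\mathcal Q\lesssim L_{min}^{1/2}\,\big\langle N_{max}^{-1}\min\big(H,\tfrac{N_{max}}{N_{min}}L_{med}\big)^{1/2}\big\rangle_Z$; the same holds after any permutation of the indices $1,2,3$ (i.e. if $N_j\sim N_k\gg N_i$ and $H\sim L_i\gtrsim L_j,L_k$ for $\{i,j,k\}=\{1,2,3\}$); (iii) in all other cases, $\mathcal Q\lesssim L_{min}^{1/2}\,\langle N_{max}^{-1}\min(H,L_{med})^{1/2}\rangle_Z$.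
   Context: Let $Z$ be an abelian group with invariant measure $d\xi$. For $k\ge2$ let $\Gamma_k(Z)=\{(\xi_1,\dots,\xi_k)\in Z^k:\xi_1+\dots+\xi_k=0\}$ with the measure $\int_{\Gamma_k(Z)}f=\int_{Z^{k-1}}f(\xi_1,\dots,\xi_{k-1},-\xi_1-\dots-\xi_{k-1})\,d\xi_1\cdots d\xi_{k-1}$. For a function $m:\Gamma_k(Z)\to\mathbb C$ (a "$[k;Z]$-multiplier"; functions on $Z^k$ are restricted to $\Gamma_k(Z)$), $\|m\|_{[k;Z]}$ denotes the best constant $C$ such that $|\int_{\Gamma_k(Z)}m(\xi)\prod_{j=1}^kf_j(\xi_j)|\le C\prod_{j=1}^k\|f_j\|_{L^2(Z)}$ for all test functions $f_j$ on $Z$. On $Z\times\mathbb R$ with coordinates $(\xi,\tau)$ and given $h_1,h_2,h_3:Z\to\mathbb R$, for $((\xi_j,\tau_j))_{j=1}^3\in\Gamma_3(Z\times\mathbb R)$ set $\lambda_j=\tau_j-h_j(\xi_j)$ and $h(\xi)=h_1(\xi_1)+h_2(\xi_2)+h_3(\xi_3)$. For $N_j,L_j,H>0$ define $X_{N_1,N_2,N_3;H;L_1,L_2,L_3}:=\chi_{|h(\xi)|\sim H}\prod_{j=1}^3\chi_{|\xi_j|\sim N_j}\chi_{|\lambda_j|\sim L_j}$, where $\chi_{|x|\sim A}$ is the indicator of a fixed dyadic annulus $\{c^{-1}A\le|x|\le cA\}$. $N_{max}\ge N_{med}\ge N_{min}$ denote the maximum, median, minimum of $N_1,N_2,N_3$;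 similarly $L_{max},L_{med},L_{min}$. $A\lesssim B$ means $A\le CB$ with $C$ depending only on fixed parameters (dimension, exponents, and the implicit constants in the hypotheses); $A\sim B$ means $A\lesssim B\lesssim A$; $A\ll B$ means $A\le C^{-1}B$ for a sufficiently large such $C$. Here $\langle x\rangle_Z:=|x|$ if $Z=\mathbb R$ and $\langle x\rangle_Z:=1+|x|$ if $Z=\mathbb Z$. *)

theory Defs
  imports "HOL-Analysis.Analysis"
begin

text \<open>Points of Z x R are represented as pairs (xi, tau) :: real \<times> real.
  Z = R: the measure on Z is lborel.  Z = Z: the measure on Z is the counting
  measure on the integers, viewed as the subset Ints of the reals.\<close>

definition ann :: "real \<Rightarrow> real \<Rightarrow> real \<Rightarrow> bool" where
  "ann c A x \<longleftrightarrow> A / c \<le> \<bar>x\<bar> \<and> \<bar>x\<bar> \<le> c * A"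

definition sim :: "real \<Rightarrow> real \<Rightarrow> real \<Rightarrow> bool" where
  "sim K a b \<longleftrightarrow> a \<le> K * b \<and> b \<le> K * a"

definition max3 :: "real \<Rightarrow> real \<Rightarrow> real \<Rightarrow> real" where
  "max3 a b c = max a (max b c)"
definition min3 :: "real \<Rightarrow> real \<Rightarrow> real \<Rightarrow> real" where
  "min3 a b c = min a (min b c)"
definition med3 :: "real \<Rightarrow> real \<Rightarrow> real \<Rightarrow> real" where
  "med3 a b c = a + b + c - max3 a b c - min3 a b c"

definition L2space :: "'a measure \<Rightarrow> ('a \<Rightarrow> complex) set" where
  "L2space M = {f. f \<in> borel_measurable M \<and> integrable M (\<lambda>x. (cmod (f x))\<^sup>2)}"
definition L2norm :: "'a measure \<Rightarrow> ('a \<Rightarrow> complex) \<Rightarrow> real" where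
  "L2norm M f = sqrt (\<integral>x. (cmod (f x))\<^sup>2 \<partial>M)"

text \<open>The third point of Gamma_3(Z x R): x3 = - x1 - x2.\<close>
definition neg_sum :: "real \<times> real \<Rightarrow> real \<times> real \<Rightarrow> real \<times> real" where
  "neg_sum p q = (- fst p - fst q, - snd p - snd q)"

definition ZR :: "real measure \<Rightarrow> (real \<times> real) measure" where
  "ZR M = M \<Otimes>\<^sub>M lborel"

definition tri_form :: "real measure \<Rightarrow> (real \<times> real \<Rightarrow> real \<times> real \<Rightarrow> real \<times> real \<Rightarrow> real)
    \<Rightarrow> (real \<times> real \<Rightarrow> complex) \<Rightarrow> (real \<times> real \<Rightarrow> complex) \<Rightarrow> (real \<times> real \<Rightarrow> complex) \<Rightarrow> complex" where
  "tri_form M m f1 f2 f3 =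
     (\<integral>pq. complex_of_real (m (fst pq) (snd pq) (neg_sum (fst pq) (snd pq)))
            * f1 (fst pq) * f2 (snd pq) * f3 (neg_sum (fst pq) (snd pq)) \<partial>(ZR M \<Otimes>\<^sub>M ZR M))"

definition mult_norm3 :: "real measure \<Rightarrow> (real \<times> real \<Rightarrow> real \<times> real \<Rightarrow> real \<times> real \<Rightarrow> real) \<Rightarrow> ennreal" where
  "mult_norm3 M m =
     (SUP F \<in> {(f1, f2, f3). f1 \<in> L2space (ZR M) \<and> f2 \<in> L2space (ZR M) \<and> f3 \<in> L2space (ZR M)
                  \<and> L2norm (ZR M) f1 \<le> 1 \<and> L2norm (ZR M) f2 \<le> 1 \<and> L2norm (ZR M) f3 \<le> 1}.
        ennreal (cmod (case F of (f1, f2, f3) \<Rightarrow> tri_form M m f1 f2 f3)))"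

definition Xmult :: "real \<Rightarrow> (real \<Rightarrow> real) \<Rightarrow> (real \<Rightarrow> real) \<Rightarrow> (real \<Rightarrow> real)
    \<Rightarrow> real \<Rightarrow> real \<Rightarrow> real \<Rightarrow> real \<Rightarrow> real \<Rightarrow> real \<Rightarrow> real
    \<Rightarrow> real \<times> real \<Rightarrow> real \<times> real \<Rightarrow> real \<times> real \<Rightarrow> real" where
  "Xmult c h1 h2 h3 N1 N2 N3 H L1 L2 L3 x1 x2 x3 =
     (if ann c H (h1 (fst x1) + h2 (fst x2) + h3 (fst x3))
         \<and> ann c N1 (fst x1) \<and> ann c N2 (fst x2) \<and> ann c N3 (fst x3)
         \<and> ann c L1 (snd x1 - h1 (fst x1)) \<and> ann c L2 (snd x2 - h2 (fst x2))
         \<and> ann c L3 (snd x3 - h3 (fst x3))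
      then 1 else 0)"

definition std_hyp :: "real \<Rightarrow> real \<Rightarrow> real \<Rightarrow> real \<Rightarrow> real \<Rightarrow> real \<Rightarrow> real \<Rightarrow> real \<Rightarrow> bool" where
  "std_hyp C0 N1 N2 N3 H L1 L2 L3 \<longleftrightarrow>
     H > 0 \<and> N1 > 0 \<and> N2 > 0 \<and> N3 > 0 \<and> L1 > 0 \<and> L2 > 0 \<and> L3 > 0
     \<and> sim C0 (max3 N1 N2 N3) (med3 N1 N2 N3)
     \<and> sim C0 (max3 L1 L2 L3) (max H (med3 L1 L2 L3))
     \<and> sim C0 H (N1 * N2 * N3)"

definition case_pp :: "real \<Rightarrow> real \<Rightarrow> real \<Rightarrow> real \<Rightarrow> real \<Rightarrow> real \<Rightarrow> real \<Rightarrow> real \<Rightarrow> bool" where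
  "case_pp C1 N1 N2 N3 H L1 L2 L3 \<longleftrightarrow>
     sim C1 (max3 N1 N2 N3) (min3 N1 N2 N3) \<and> sim C1 (max3 L1 L2 L3) H"

definition case_pm1 :: "real \<Rightarrow> real \<Rightarrow> real \<Rightarrow> real \<Rightarrow> real \<Rightarrow> real \<Rightarrow> real \<Rightarrow> real \<Rightarrow> real \<Rightarrow> bool" where
  "case_pm1 C1 K N1 N2 N3 H L1 L2 L3 \<longleftrightarrow>
     sim C1 N2 N3 \<and> K * N1 \<le> N2 \<and> K * N1 \<le> N3
     \<and> sim C1 H L1 \<and> L2 \<le> C1 * L1 \<and> L3 \<le> C1 * L1"

definition case_pm :: "real \<Rightarrow> real \<Rightarrow> real \<Rightarrow> real \<Rightarrow> real \<Rightarrow> real \<Rightarrow> real \<Rightarrow> real \<Rightarrow> real \<Rightarrow> bool" where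
  "case_pm C1 K N1 N2 N3 H L1 L2 L3 \<longleftrightarrow>
     case_pm1 C1 K N1 N2 N3 H L1 L2 L3
     \<or> case_pm1 C1 K N2 N1 N3 H L2 L1 L3
     \<or> case_pm1 C1 K N3 N1 N2 H L3 L1 L2"

end

theory Submission
  imports Defs
begin

text \<open>
  Every estimate comes from Schur's test: for a multiplier with values in \<open>[0, 1]\<close> the trilinear
  form is at most the square root of the largest measure of a fibre obtained by freezing one of the
  three variables \<open>(\<xi>\<^sub>j, \<tau>\<^sub>j)\<close>. Freezing \<open>(\<xi>\<^sub>1, \<tau>\<^sub>1)\<close>, the modulations confine \<open>\<tau>\<^sub>2\<close> to an interval of
  length \<open>\<lesssim> min L\<^sub>2 L\<^sub>3\<close>, and the resonance identity \<open>\<xi>\<^sub>1\<^sup>3 + \<xi>\<^sub>2\<^sup>3 + \<xi>\<^sub>3\<^sup>3 = 3 \<xi>\<^sub>1 \<xi>\<^sub>2 \<xi>\<^sub>3\<close> confines \<open>\<xi>\<^sub>2\<close>,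
  on either side of \<open>-\<xi>\<^sub>1/2\<close>, to a set whose diameter is \<open>\<lesssim> N\<^sub>2\<close> trivially, \<open>\<lesssim> (L / N\<^sub>1)\<^sup>1\<^sup>/\<^sup>2\<close>
  always, and \<open>\<lesssim> L / (N\<^sub>1 R)\<close> if \<open>\<xi>\<^sub>2\<close> stays at distance \<open>R\<close> from \<open>-\<xi>\<^sub>1/2\<close>. On \<open>\<int>\<close> an interval of
  length \<open>w\<close> carries at most \<open>w + 1\<close> points, which is where \<open>\<langle>\<cdot>\<rangle>\<^sub>Z\<close> comes from. Each regime of the
  theorem is a choice of the frozen variable and of the width, and the symmetry of the multiplier
  under permutations of the three factors reduces to the case where \<open>L\<^sub>1\<close> is the largest modulation.
\<close>

section \<open>Measures on \<open>Z \<times> \<real>\<close>\<close>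

definition Z_measure :: "real measure \<Rightarrow> bool" where
  "Z_measure M \<longleftrightarrow> M = lborel \<or> M = count_space \<int>"

lemma Z_measure_cases [consumes 1, case_names lborel Ints]:
  assumes "Z_measure M" "M = lborel \<Longrightarrow> P" "M = count_space \<int> \<Longrightarrow> P"
  shows P
  using assms unfolding Z_measure_def by blast

lemma sigma_finite_ZR: "Z_measure M \<Longrightarrow> sigma_finite_measure (ZR M)"
  unfolding ZR_def Z_measure_def
  by (auto intro!: sigma_finite_pair_measure sigma_finite_measure_count_space_countable
      lborel.sigma_finite_measure_axioms countable_int)

lemma space_ZR: "space (ZR M) = space M \<times> UNIV"
  unfolding ZR_def by (simp add: space_pair_measure)

lemma measurable_Z_measure_borel: "Z_measure M \<Longrightarrow> (\<lambda>x. x) \<in> M \<rightarrow>\<^sub>M borel"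
  by (erule Z_measure_cases) auto

lemma borel_measurable_Z_measure: "Z_measure M \<Longrightarrow> f \<in> borel_measurable borel \<Longrightarrow> f \<in> borel_measurable M"
  using measurable_comp[OF measurable_Z_measure_borel] by (simp add: comp_def)

text \<open>On the lattice every subset of the space is countable, hence Borel.\<close>
lemma measurable_into_Z_measure:
  assumes "Z_measure M" "f \<in> N \<rightarrow>\<^sub>M borel" "f \<in> space N \<rightarrow> space M"
  shows "f \<in> N \<rightarrow>\<^sub>M M"
  using assms(1)
proof (cases rule: Z_measure_cases)
  case Ints
  show ?thesis unfolding Ints
  proof (rule measurableI)
    show "f x \<in> space (count_space \<int>)" if "x \<in> space N" for x
      using assms(3) that Ints by auto
    fix A :: "real set" assume "A \<in> sets (count_space \<int>)"
    then have "countable A" using countable_subset countable_int by auto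
    then have "A \<in> sets borel" by (rule sets.countable[rotated]) (simp add: borel_closed)
    then show "f -` A \<inter> space N \<in> sets N" using assms(2) by (rule measurable_sets[rotated])
  qed
qed (use assms in simp)

lemma measurable_ZR_borel_id:
  assumes "Z_measure M"
  shows "(\<lambda>x. x) \<in> ZR M \<rightarrow>\<^sub>M (borel :: (real \<times> real) measure)"
proof -
  have "(\<lambda>x. (fst x, snd x)) \<in> ZR M \<rightarrow>\<^sub>M (borel \<Otimes>\<^sub>M (borel :: real measure))"
    unfolding ZR_def using measurable_Z_measure_borel[OF assms] by measurable
  then show ?thesis by (simp add: borel_prod)
qed

lemma measurable_ZR_ZR_borel_id:
  assumes "Z_measure M"
  shows "(\<lambda>x. x) \<in> ZR M \<Otimes>\<^sub>M ZR M \<rightarrow>\<^sub>M (borel :: ((real \<times> real) \<times> (real \<times> real)) measure)"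
proof -
  have "(\<lambda>x. (fst x, snd x)) \<in> ZR M \<Otimes>\<^sub>M ZR M \<rightarrow>\<^sub>M (borel \<Otimes>\<^sub>M (borel :: (real \<times> real) measure))"
    using measurable_ZR_borel_id[OF assms] by measurable
  then show ?thesis by (simp add: borel_prod)
qed

lemma measurable_ZR_of_borel: "Z_measure M \<Longrightarrow> g \<in> borel \<rightarrow>\<^sub>M N \<Longrightarrow> g \<in> ZR M \<rightarrow>\<^sub>M N"
  using measurable_comp[OF measurable_ZR_borel_id] by (simp add: comp_def)

lemma measurable_ZR_ZR_of_borel: "Z_measure M \<Longrightarrow> g \<in> borel \<rightarrow>\<^sub>M N \<Longrightarrow> g \<in> ZR M \<Otimes>\<^sub>M ZR M \<rightarrow>\<^sub>M N"
  using measurable_comp[OF measurable_ZR_ZR_borel_id] by (simp add: comp_def)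

lemma measurable_into_ZR:
  assumes M: "Z_measure M" and f: "f \<in> N \<rightarrow>\<^sub>M (borel :: (real \<times> real) measure)"
    and space: "f \<in> space N \<rightarrow> space (ZR M)"
  shows "f \<in> N \<rightarrow>\<^sub>M ZR M"
  unfolding ZR_def measurable_pair_iff
proof
  have f': "f \<in> N \<rightarrow>\<^sub>M borel \<Otimes>\<^sub>M borel" using f by (simp add: borel_prod)
  have "fst \<circ> f \<in> N \<rightarrow>\<^sub>M borel" using measurable_comp[OF f' measurable_fst] .
  moreover have "fst \<circ> f \<in> space N \<rightarrow> space M"
  proof
    fix x assume "x \<in> space N"
    then have "f x \<in> space M \<times> UNIV" using space by (auto simp: space_ZR)
    then show "(fst \<circ> f) x \<in> space M" by (auto simp: mem_Times_iff)
  qed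
  ultimately show "fst \<circ> f \<in> N \<rightarrow>\<^sub>M M" by (rule measurable_into_Z_measure[OF M])
  show "snd \<circ> f \<in> N \<rightarrow>\<^sub>M lborel" using measurable_comp[OF f' measurable_snd] by simp
qed

lemma neg_sum_neg_sum [simp]: "neg_sum (neg_sum p q) q = p"
  unfolding neg_sum_def by simp

lemma neg_sum_commute: "neg_sum p q = neg_sum q p"
  unfolding neg_sum_def by (simp add: algebra_simps)

lemma neg_sum_in_space_ZR:
  "Z_measure M \<Longrightarrow> p \<in> space (ZR M) \<Longrightarrow> q \<in> space (ZR M) \<Longrightarrow> neg_sum p q \<in> space (ZR M)"
  unfolding Z_measure_def space_ZR neg_sum_def by (auto simp: mem_Times_iff)

lemma borel_measurable_neg_sum [measurable]:
  "(\<lambda>x::(real \<times> real) \<times> (real \<times> real). neg_sum (fst x) (snd x)) \<in> borel_measurable borel"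
  unfolding neg_sum_def by (rule borel_measurable_continuous_onI) (auto intro!: continuous_intros)

lemma measurable_neg_sum:
  assumes "Z_measure M"
  shows "(\<lambda>x. neg_sum (fst x) (snd x)) \<in> ZR M \<Otimes>\<^sub>M ZR M \<rightarrow>\<^sub>M ZR M"
  using assms by (intro measurable_into_ZR measurable_ZR_ZR_of_borel borel_measurable_neg_sum)
    (auto simp: space_pair_measure intro: neg_sum_in_space_ZR)

lemma nn_integral_Z_measure_reflect:
  assumes M: "Z_measure M" and a: "a \<in> space M" and G: "G \<in> borel_measurable M"
  shows "(\<integral>\<^sup>+x. G (- x - a) \<partial>M) = (\<integral>\<^sup>+x. G x \<partial>M)"
  using M
proof (cases rule: Z_measure_cases)
  case lborel
  show ?thesis
    using nn_integral_real_affine[of G "-1" "-a"] G by (simp add: lborel algebra_simps)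
next
  case Ints
  have "bij_betw (\<lambda>x. - x - a) \<int> \<int>"
    by (rule bij_betwI[where g="\<lambda>x. - x - a"]) (use a Ints in auto)
  then show ?thesis unfolding Ints by (rule nn_integral_bij_count_space)
qed

lemma nn_integral_ZR_neg_sum:
  assumes M: "Z_measure M" and q: "q \<in> space (ZR M)" and \<phi>: "\<phi> \<in> borel_measurable (ZR M)"
  shows "(\<integral>\<^sup>+p. \<phi> (neg_sum p q) \<partial>ZR M) = (\<integral>\<^sup>+p. \<phi> p \<partial>ZR M)"
proof -
  obtain a b where q_eq: "q = (a, b)" by (cases q)
  have a: "a \<in> space M" using q by (simp add: q_eq space_ZR)
  have \<phi>': "\<phi> \<in> borel_measurable (M \<Otimes>\<^sub>M lborel)" using \<phi> unfolding ZR_def .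
  have "(\<lambda>p. neg_sum p q) \<in> ZR M \<rightarrow>\<^sub>M ZR M"
  proof (rule measurable_into_ZR[OF M])
    show "(\<lambda>p. neg_sum p q) \<in> borel_measurable (ZR M)"
      unfolding neg_sum_def
      by (rule measurable_ZR_of_borel[OF M], rule borel_measurable_continuous_onI)
        (auto intro!: continuous_intros)
  qed (use neg_sum_in_space_ZR[OF M _ q] in auto)
  then have \<phi>q: "(\<lambda>p. \<phi> (neg_sum p q)) \<in> borel_measurable (M \<Otimes>\<^sub>M lborel)"
    using \<phi> unfolding ZR_def by measurable
  have inner: "(\<integral>\<^sup>+y. \<phi> (neg_sum (x, y) q) \<partial>lborel) = (\<integral>\<^sup>+y. \<phi> (- x - a, y) \<partial>lborel)"
    if "x \<in> space M" for x
  proof -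
    have "- x - a \<in> space M" using that a by (cases rule: Z_measure_cases[OF M]) auto
    then have g: "(\<lambda>y. \<phi> (- x - a, y)) \<in> borel_measurable borel"
      using measurable_Pair2[OF \<phi>'] by simp
    show ?thesis
      using nn_integral_real_affine[OF g, of "-1" "-b"] by (simp add: neg_sum_def q_eq algebra_simps)
  qed
  have "(\<integral>\<^sup>+p. \<phi> (neg_sum p q) \<partial>ZR M) = (\<integral>\<^sup>+x. \<integral>\<^sup>+y. \<phi> (neg_sum (x, y) q) \<partial>lborel \<partial>M)"
    unfolding ZR_def using lborel.nn_integral_fst[OF \<phi>q] by simp
  also have "\<dots> = (\<integral>\<^sup>+x. (\<lambda>x. \<integral>\<^sup>+y. \<phi> (x, y) \<partial>lborel) (- x - a) \<partial>M)"
    by (rule nn_integral_cong) (simp add: inner)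
  also have "\<dots> = (\<integral>\<^sup>+x. \<integral>\<^sup>+y. \<phi> (x, y) \<partial>lborel \<partial>M)"
    by (rule nn_integral_Z_measure_reflect[OF M a lborel.borel_measurable_nn_integral_fst[OF \<phi>']])
  also have "\<dots> = (\<integral>\<^sup>+p. \<phi> p \<partial>ZR M)"
    unfolding ZR_def using lborel.nn_integral_fst[OF \<phi>'] by simp
  finally show ?thesis .
qed

section \<open>Nonnegative trilinear forms and Schur's test\<close>

definition on_Gamma3 ::
    "(real \<times> real \<Rightarrow> real \<times> real \<Rightarrow> real \<times> real \<Rightarrow> real) \<Rightarrow> (real \<times> real) \<times> (real \<times> real) \<Rightarrow> real" where
  "on_Gamma3 m pq = m (fst pq) (snd pq) (neg_sum (fst pq) (snd pq))"

definition tri_form_nn :: "real measure \<Rightarrow> (real \<times> real \<Rightarrow> real \<times> real \<Rightarrow> real \<times> real \<Rightarrow> real)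
    \<Rightarrow> (real \<times> real \<Rightarrow> ennreal) \<Rightarrow> (real \<times> real \<Rightarrow> ennreal) \<Rightarrow> (real \<times> real \<Rightarrow> ennreal) \<Rightarrow> ennreal" where
  "tri_form_nn M m F1 F2 F3 =
     (\<integral>\<^sup>+pq. ennreal (on_Gamma3 m pq) * F1 (fst pq) * F2 (snd pq) * F3 (neg_sum (fst pq) (snd pq))
        \<partial>(ZR M \<Otimes>\<^sub>M ZR M))"

definition L2_unit_ball_nn :: "real measure \<Rightarrow> (real \<times> real \<Rightarrow> ennreal) set" where
  "L2_unit_ball_nn M = {F \<in> borel_measurable (ZR M). (\<integral>\<^sup>+p. (F p)\<^sup>2 \<partial>ZR M) \<le> 1}"

text \<open>For a nonnegative multiplier it suffices to test the trilinear form on nonnegative functions,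
  and for these Fubini's theorem and the reflection \<open>p \<mapsto> -p - q\<close> make the symmetry of the form
  under permutations of the three factors straightforward.\<close>
definition mult_norm3_nn :: "real measure \<Rightarrow> (real \<times> real \<Rightarrow> real \<times> real \<Rightarrow> real \<times> real \<Rightarrow> real) \<Rightarrow> ennreal" where
  "mult_norm3_nn M m =
     (SUP (F1, F2, F3) \<in> L2_unit_ball_nn M \<times> L2_unit_ball_nn M \<times> L2_unit_ball_nn M. tri_form_nn M m F1 F2 F3)"

lemma tri_form_nn_le_mult_norm3_nn:
  "F1 \<in> L2_unit_ball_nn M \<Longrightarrow> F2 \<in> L2_unit_ball_nn M \<Longrightarrow> F3 \<in> L2_unit_ball_nn M
    \<Longrightarrow> tri_form_nn M m F1 F2 F3 \<le> mult_norm3_nn M m"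
  unfolding mult_norm3_nn_def by (rule SUP_upper2[of "(F1, F2, F3)"]) auto

lemma mult_norm3_nn_leI:
  "(\<And>F1 F2 F3. F1 \<in> L2_unit_ball_nn M \<Longrightarrow> F2 \<in> L2_unit_ball_nn M \<Longrightarrow> F3 \<in> L2_unit_ball_nn M
      \<Longrightarrow> tri_form_nn M m F1 F2 F3 \<le> S) \<Longrightarrow> mult_norm3_nn M m \<le> S"
  unfolding mult_norm3_nn_def by (rule SUP_least) auto

lemma norm_in_L2_unit_ball_nn:
  assumes "f \<in> L2space (ZR M)" "L2norm (ZR M) f \<le> 1"
  shows "(\<lambda>p. ennreal (cmod (f p))) \<in> L2_unit_ball_nn M"
proof -
  have f: "f \<in> borel_measurable (ZR M)" "integrable (ZR M) (\<lambda>x. (cmod (f x))\<^sup>2)"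
    using assms(1) unfolding L2space_def by auto
  have "(\<integral>p. (cmod (f p))\<^sup>2 \<partial>ZR M) \<le> 1"
    using assms(2) unfolding L2norm_def by simp
  moreover have "(\<integral>\<^sup>+p. (ennreal (cmod (f p)))\<^sup>2 \<partial>ZR M) = ennreal (\<integral>p. (cmod (f p))\<^sup>2 \<partial>ZR M)"
    by (simp add: ennreal_power nn_integral_eq_integral[OF f(2)])
  ultimately show ?thesis
    using f(1) unfolding L2_unit_ball_nn_def by (simp add: ennreal_leI)
qed

lemma mult_norm3_le_mult_norm3_nn:
  assumes m0: "\<And>x1 x2 x3. 0 \<le> m x1 x2 x3"
  shows "mult_norm3 M m \<le> mult_norm3_nn M m"
  unfolding mult_norm3_def
proof (rule SUP_least, clarify)
  fix f1 f2 f3 assume f: "f1 \<in> L2space (ZR M)" "f2 \<in> L2space (ZR M)" "f3 \<in> L2space (ZR M)"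
    "L2norm (ZR M) f1 \<le> 1" "L2norm (ZR M) f2 \<le> 1" "L2norm (ZR M) f3 \<le> 1"
  let ?g = "\<lambda>pq. complex_of_real (on_Gamma3 m pq) * f1 (fst pq) * f2 (snd pq) * f3 (neg_sum (fst pq) (snd pq))"
  have "ennreal (cmod (tri_form M m f1 f2 f3)) \<le> (\<integral>\<^sup>+pq. ennreal (norm (?g pq)) \<partial>(ZR M \<Otimes>\<^sub>M ZR M))"
    unfolding tri_form_def on_Gamma3_def[symmetric]
    by (cases "integrable (ZR M \<Otimes>\<^sub>M ZR M) ?g")
      (simp_all add: integral_norm_bound_ennreal not_integrable_integral_eq)
  also have "\<dots> = tri_form_nn M m (\<lambda>p. cmod (f1 p)) (\<lambda>p. cmod (f2 p)) (\<lambda>p. cmod (f3 p))"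
    unfolding tri_form_nn_def
    by (rule nn_integral_cong) (simp add: norm_mult m0 on_Gamma3_def ennreal_mult'')
  also have "\<dots> \<le> mult_norm3_nn M m"
    using f by (intro tri_form_nn_le_mult_norm3_nn norm_in_L2_unit_ball_nn)
  finally show "ennreal (cmod (tri_form M m f1 f2 f3)) \<le> mult_norm3_nn M m" .
qed

lemma ennreal_mult_le_amgm:
  fixes u v :: ennreal and t :: real
  assumes t: "t > 0"
  shows "u * v \<le> ennreal (1 / (2 * t)) * u\<^sup>2 + ennreal (t / 2) * v\<^sup>2"
proof (cases u; cases v)
  fix x y assume u: "u = ennreal x" "0 \<le> x" and v: "v = ennreal y" "0 \<le> y"
  have "1 / (2 * t) * x\<^sup>2 + t / 2 * y\<^sup>2 - x * y = (x - t * y)\<^sup>2 / (2 * t)"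
    using t by (simp add: field_simps power2_eq_square)
  moreover have "0 \<le> (x - t * y)\<^sup>2 / (2 * t)" using t by simp
  ultimately have "x * y \<le> 1 / (2 * t) * x\<^sup>2 + t / 2 * y\<^sup>2" by linarith
  then show ?thesis using u v t
    by (simp add: ennreal_mult'[symmetric] ennreal_power ennreal_plus[symmetric] ennreal_leI
        del: ennreal_plus)
qed (use t in \<open>auto simp: ennreal_mult_top ennreal_top_mult power2_eq_square\<close>)

lemma nn_integral_ZR_fiber_le:
  fixes s :: "(real \<times> real) \<times> (real \<times> real) \<Rightarrow> ennreal"
  assumes M: "Z_measure M" and s: "s \<in> borel_measurable (ZR M \<Otimes>\<^sub>M ZR M)"
    and G: "G \<in> borel_measurable (ZR M)"
    and fiber: "\<And>p. p \<in> space (ZR M) \<Longrightarrow> (\<integral>\<^sup>+q. s (p, q) \<partial>ZR M) \<le> B"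
  shows "(\<integral>\<^sup>+pq. s pq * G (fst pq) \<partial>(ZR M \<Otimes>\<^sub>M ZR M)) \<le> B * (\<integral>\<^sup>+p. G p \<partial>ZR M)"
proof -
  interpret sigma_finite_measure "ZR M" by (rule sigma_finite_ZR[OF M])
  have "(\<integral>\<^sup>+pq. s pq * G (fst pq) \<partial>(ZR M \<Otimes>\<^sub>M ZR M)) = (\<integral>\<^sup>+p. \<integral>\<^sup>+q. s (p, q) * G p \<partial>ZR M \<partial>ZR M)"
    using nn_integral_fst[of "\<lambda>pq. s pq * G (fst pq)"] s G by simp
  also have "\<dots> = (\<integral>\<^sup>+p. (\<integral>\<^sup>+q. s (p, q) \<partial>ZR M) * G p \<partial>ZR M)"
    by (rule nn_integral_cong) (simp add: nn_integral_multc measurable_Pair2[OF s])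
  also have "\<dots> \<le> (\<integral>\<^sup>+p. B * G p \<partial>ZR M)"
    by (intro nn_integral_mono mult_right_mono fiber) auto
  also have "\<dots> = B * (\<integral>\<^sup>+p. G p \<partial>ZR M)"
    using G by (rule nn_integral_cmult)
  finally show ?thesis .
qed

lemma nn_integral_ZR_convolution:
  assumes M: "Z_measure M" and G: "G \<in> borel_measurable (ZR M)" and H: "H \<in> borel_measurable (ZR M)"
  shows "(\<integral>\<^sup>+pq. G (snd pq) * H (neg_sum (fst pq) (snd pq)) \<partial>(ZR M \<Otimes>\<^sub>M ZR M))
    = (\<integral>\<^sup>+q. G q \<partial>ZR M) * (\<integral>\<^sup>+p. H p \<partial>ZR M)"
proof -
  interpret sigma_finite_measure "ZR M" by (rule sigma_finite_ZR[OF M])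
  interpret pair_sigma_finite "ZR M" "ZR M" ..
  have Hns: "(\<lambda>pq. H (neg_sum (fst pq) (snd pq))) \<in> borel_measurable (ZR M \<Otimes>\<^sub>M ZR M)"
    using measurable_comp[OF measurable_neg_sum[OF M] H] by (simp add: comp_def)
  have "(\<integral>\<^sup>+pq. G (snd pq) * H (neg_sum (fst pq) (snd pq)) \<partial>(ZR M \<Otimes>\<^sub>M ZR M))
      = (\<integral>\<^sup>+q. \<integral>\<^sup>+p. G q * H (neg_sum p q) \<partial>ZR M \<partial>ZR M)"
    using nn_integral_snd[of "\<lambda>pq. G (snd pq) * H (neg_sum (fst pq) (snd pq))"] G Hns by simp
  also have "\<dots> = (\<integral>\<^sup>+q. G q * (\<integral>\<^sup>+p. H p \<partial>ZR M) \<partial>ZR M)"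
  proof (rule nn_integral_cong)
    fix q assume q: "q \<in> space (ZR M)"
    have "(\<lambda>p. H (neg_sum p q)) \<in> borel_measurable (ZR M)"
      using measurable_Pair1[OF Hns q] by simp
    then show "(\<integral>\<^sup>+p. G q * H (neg_sum p q) \<partial>ZR M) = G q * (\<integral>\<^sup>+p. H p \<partial>ZR M)"
      by (simp add: nn_integral_cmult nn_integral_ZR_neg_sum[OF M q H])
  qed
  also have "\<dots> = (\<integral>\<^sup>+q. G q \<partial>ZR M) * (\<integral>\<^sup>+p. H p \<partial>ZR M)"
    using G by (rule nn_integral_multc)
  finally show ?thesis .
qed

text \<open>Schur's test: bound \<open>s F\<^sub>1 F\<^sub>2 F\<^sub>3\<close> pointwise by \<open>s F\<^sub>1\<^sup>2 / (2 t) + t F\<^sub>2\<^sup>2 F\<^sub>3\<^sup>2 / 2\<close>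
  (using \<open>s \<le> 1\<close>), integrate the first term along the fibres and the second one as a convolution,
  and optimise with \<open>t = \<surd>B\<close>.\<close>
lemma tri_form_nn_le_sqrt_fiber:
  assumes M: "Z_measure M" and m: "on_Gamma3 m \<in> borel_measurable borel"
    and m1: "\<And>pq. on_Gamma3 m pq \<le> 1" and B: "B > 0"
    and fiber: "\<And>p. p \<in> space (ZR M) \<Longrightarrow> (\<integral>\<^sup>+q. ennreal (on_Gamma3 m (p, q)) \<partial>ZR M) \<le> ennreal B"
    and F: "F1 \<in> L2_unit_ball_nn M" "F2 \<in> L2_unit_ball_nn M" "F3 \<in> L2_unit_ball_nn M"
  shows "tri_form_nn M m F1 F2 F3 \<le> ennreal (sqrt B)"
proof -
  define t where "t = sqrt B"
  have t: "t > 0" "B = t * t" using B by (simp_all add: t_def)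
  let ?s = "\<lambda>pq. ennreal (on_Gamma3 m pq)"
  let ?a = "\<lambda>pq. ?s pq * (F1 (fst pq))\<^sup>2"
  let ?b = "\<lambda>pq. (F2 (snd pq))\<^sup>2 * (F3 (neg_sum (fst pq) (snd pq)))\<^sup>2"
  have Fm: "F1 \<in> borel_measurable (ZR M)" "F2 \<in> borel_measurable (ZR M)" "F3 \<in> borel_measurable (ZR M)"
    and Fn: "(\<integral>\<^sup>+p. (F1 p)\<^sup>2 \<partial>ZR M) \<le> 1" "(\<integral>\<^sup>+p. (F2 p)\<^sup>2 \<partial>ZR M) \<le> 1" "(\<integral>\<^sup>+p. (F3 p)\<^sup>2 \<partial>ZR M) \<le> 1"
    using F by (auto simp: L2_unit_ball_nn_def)
  have s: "?s \<in> borel_measurable (ZR M \<Otimes>\<^sub>M ZR M)"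
    using measurable_ZR_ZR_of_borel[OF M m] by measurable
  have F3ns: "(\<lambda>pq. F3 (neg_sum (fst pq) (snd pq))) \<in> borel_measurable (ZR M \<Otimes>\<^sub>M ZR M)"
    using measurable_comp[OF measurable_neg_sum[OF M] Fm(3)] by (simp add: comp_def)
  have "(\<integral>\<^sup>+pq. ?a pq \<partial>(ZR M \<Otimes>\<^sub>M ZR M)) \<le> ennreal B * (\<integral>\<^sup>+p. (F1 p)\<^sup>2 \<partial>ZR M)"
    using Fm(1) by (intro nn_integral_ZR_fiber_le[OF M s _ fiber]) auto
  also have "\<dots> \<le> ennreal B" using mult_left_mono[OF Fn(1), of "ennreal B"] by simp
  finally have Ia: "(\<integral>\<^sup>+pq. ?a pq \<partial>(ZR M \<Otimes>\<^sub>M ZR M)) \<le> ennreal B" .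
  have "(\<integral>\<^sup>+pq. ?b pq \<partial>(ZR M \<Otimes>\<^sub>M ZR M)) = (\<integral>\<^sup>+q. (F2 q)\<^sup>2 \<partial>ZR M) * (\<integral>\<^sup>+p. (F3 p)\<^sup>2 \<partial>ZR M)"
    using Fm by (intro nn_integral_ZR_convolution[OF M]) auto
  also have "\<dots> \<le> 1" using mult_mono[OF Fn(2,3)] by simp
  finally have Ib: "(\<integral>\<^sup>+pq. ?b pq \<partial>(ZR M \<Otimes>\<^sub>M ZR M)) \<le> 1" .
  have pointwise: "?s pq * F1 (fst pq) * F2 (snd pq) * F3 (neg_sum (fst pq) (snd pq))
      \<le> ennreal (1 / (2 * t)) * ?a pq + ennreal (t / 2) * ?b pq" for pq
  proof -
    let ?u = "F1 (fst pq)" and ?v = "F2 (snd pq) * F3 (neg_sum (fst pq) (snd pq))"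
    have "?u * ?v \<le> ennreal (1 / (2 * t)) * ?u\<^sup>2 + ennreal (t / 2) * ?v\<^sup>2"
      by (rule ennreal_mult_le_amgm[OF t(1)])
    then have "?s pq * ?u * ?v \<le> ?s pq * (ennreal (1 / (2 * t)) * ?u\<^sup>2 + ennreal (t / 2) * ?v\<^sup>2)"
      by (simp add: mult.assoc mult_left_mono)
    also have "\<dots> = ennreal (1 / (2 * t)) * ?a pq + ennreal (t / 2) * (?s pq * ?v\<^sup>2)"
      by (simp add: algebra_simps)
    also have "\<dots> \<le> ennreal (1 / (2 * t)) * ?a pq + ennreal (t / 2) * (1 * ?v\<^sup>2)"
      using m1[of pq] by (intro add_left_mono mult_left_mono mult_right_mono) auto
    finally show ?thesis by (simp add: power_mult_distrib mult.assoc)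
  qed
  have "tri_form_nn M m F1 F2 F3
      \<le> (\<integral>\<^sup>+pq. ennreal (1 / (2 * t)) * ?a pq + ennreal (t / 2) * ?b pq \<partial>(ZR M \<Otimes>\<^sub>M ZR M))"
    unfolding tri_form_nn_def by (intro nn_integral_mono pointwise)
  also have "\<dots> = ennreal (1 / (2 * t)) * (\<integral>\<^sup>+pq. ?a pq \<partial>(ZR M \<Otimes>\<^sub>M ZR M))
      + ennreal (t / 2) * (\<integral>\<^sup>+pq. ?b pq \<partial>(ZR M \<Otimes>\<^sub>M ZR M))"
    using s Fm F3ns by (simp add: nn_integral_add nn_integral_cmult)
  also have "\<dots> \<le> ennreal (1 / (2 * t)) * ennreal B + ennreal (t / 2) * 1"
    by (intro add_mono mult_left_mono Ia Ib) auto
  also have "\<dots> = ennreal t"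
    using t by (simp add: ennreal_mult'[symmetric] ennreal_plus[symmetric] field_simps del: ennreal_plus)
  finally show ?thesis by (simp add: t_def)
qed

lemma mult_norm3_nn_le_sqrt_fiber:
  assumes "Z_measure M" "on_Gamma3 m \<in> borel_measurable borel" "\<And>pq. on_Gamma3 m pq \<le> 1" "B > 0"
    "\<And>p. p \<in> space (ZR M) \<Longrightarrow> (\<integral>\<^sup>+q. ennreal (on_Gamma3 m (p, q)) \<partial>ZR M) \<le> ennreal B"
  shows "mult_norm3_nn M m \<le> ennreal (sqrt B)"
  using tri_form_nn_le_sqrt_fiber[OF assms] by (rule mult_norm3_nn_leI)

lemma on_Gamma3_swap12: "on_Gamma3 (\<lambda>x1 x2 x3. m x2 x1 x3) (p, q) = on_Gamma3 m (q, p)"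
  unfolding on_Gamma3_def by (simp add: neg_sum_commute)

lemma on_Gamma3_swap13: "on_Gamma3 (\<lambda>x1 x2 x3. m x3 x2 x1) (p, q) = on_Gamma3 m (neg_sum p q, q)"
  unfolding on_Gamma3_def by simp

lemma borel_measurable_on_Gamma3_swap12:
  assumes "on_Gamma3 m \<in> borel_measurable borel"
  shows "on_Gamma3 (\<lambda>x1 x2 x3. m x2 x1 x3) \<in> borel_measurable borel"
proof -
  have "(\<lambda>pq :: (real \<times> real) \<times> (real \<times> real). (snd pq, fst pq)) \<in> borel \<rightarrow>\<^sub>M borel"
    by (intro borel_measurable_continuous_onI continuous_intros)
  from measurable_comp[OF this assms] show ?thesis
    by (simp add: comp_def on_Gamma3_swap12[of m, symmetric])
qed

lemma borel_measurable_on_Gamma3_swap13: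
  assumes "on_Gamma3 m \<in> borel_measurable borel"
  shows "on_Gamma3 (\<lambda>x1 x2 x3. m x3 x2 x1) \<in> borel_measurable borel"
proof -
  have "(\<lambda>pq :: (real \<times> real) \<times> (real \<times> real). (neg_sum (fst pq) (snd pq), snd pq)) \<in> borel \<rightarrow>\<^sub>M borel"
    unfolding neg_sum_def by (intro borel_measurable_continuous_onI continuous_intros)
  from measurable_comp[OF this assms] show ?thesis
    by (simp add: comp_def on_Gamma3_swap13[of m, symmetric])
qed

lemma tri_form_nn_swap12:
  assumes M: "Z_measure M" and m: "on_Gamma3 m \<in> borel_measurable borel"
    and F: "F1 \<in> borel_measurable (ZR M)" "F2 \<in> borel_measurable (ZR M)" "F3 \<in> borel_measurable (ZR M)"
  shows "tri_form_nn M (\<lambda>x1 x2 x3. m x2 x1 x3) F2 F1 F3 = tri_form_nn M m F1 F2 F3"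
proof -
  interpret Z: sigma_finite_measure "ZR M" by (rule sigma_finite_ZR[OF M])
  interpret pair_sigma_finite "ZR M" "ZR M" ..
  define f where "f p q = ennreal (on_Gamma3 m (p, q)) * F1 p * F2 q * F3 (neg_sum p q)" for p q
  have F3ns: "(\<lambda>pq. F3 (neg_sum (fst pq) (snd pq))) \<in> borel_measurable (ZR M \<Otimes>\<^sub>M ZR M)"
    using measurable_comp[OF measurable_neg_sum[OF M] F(3)] by (simp add: comp_def)
  have f: "(\<lambda>pq. f (fst pq) (snd pq)) \<in> borel_measurable (ZR M \<Otimes>\<^sub>M ZR M)"
    unfolding f_def using measurable_ZR_ZR_of_borel[OF M m] F F3ns by measurable
  have f': "(\<lambda>pq. f (snd pq) (fst pq)) \<in> borel_measurable (ZR M \<Otimes>\<^sub>M ZR M)"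
    using measurable_comp[OF measurable_pair_swap' f] by (simp add: comp_def case_prod_beta')
  have "tri_form_nn M (\<lambda>x1 x2 x3. m x2 x1 x3) F2 F1 F3 = (\<integral>\<^sup>+pq. f (snd pq) (fst pq) \<partial>(ZR M \<Otimes>\<^sub>M ZR M))"
    unfolding tri_form_nn_def f_def
    by (intro nn_integral_cong) (simp add: on_Gamma3_def neg_sum_commute mult_ac)
  also have "\<dots> = (\<integral>\<^sup>+q. \<integral>\<^sup>+p. f p q \<partial>ZR M \<partial>ZR M)"
    using Z.nn_integral_fst[OF f'] by simp
  also have "\<dots> = tri_form_nn M m F1 F2 F3"
    unfolding tri_form_nn_def using nn_integral_snd[OF f] by (simp add: f_def on_Gamma3_def)
  finally show ?thesis .
qed

lemma tri_form_nn_swap13: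
  assumes M: "Z_measure M" and m: "on_Gamma3 m \<in> borel_measurable borel"
    and F: "F1 \<in> borel_measurable (ZR M)" "F2 \<in> borel_measurable (ZR M)" "F3 \<in> borel_measurable (ZR M)"
  shows "tri_form_nn M (\<lambda>x1 x2 x3. m x3 x2 x1) F3 F2 F1 = tri_form_nn M m F1 F2 F3"
proof -
  interpret Z: sigma_finite_measure "ZR M" by (rule sigma_finite_ZR[OF M])
  interpret pair_sigma_finite "ZR M" "ZR M" ..
  define f where "f p q = ennreal (on_Gamma3 m (p, q)) * F1 p * F2 q * F3 (neg_sum p q)" for p q
  have ns: "(\<lambda>pq. neg_sum (fst pq) (snd pq)) \<in> ZR M \<Otimes>\<^sub>M ZR M \<rightarrow>\<^sub>M ZR M"
    by (rule measurable_neg_sum[OF M])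
  have f: "(\<lambda>pq. f (fst pq) (snd pq)) \<in> borel_measurable (ZR M \<Otimes>\<^sub>M ZR M)"
    unfolding f_def using measurable_ZR_ZR_of_borel[OF M m] F ns by measurable
  have f': "(\<lambda>pq. f (neg_sum (fst pq) (snd pq)) (snd pq)) \<in> borel_measurable (ZR M \<Otimes>\<^sub>M ZR M)"
    using measurable_comp[of "\<lambda>pq. (neg_sum (fst pq) (snd pq), snd pq)", OF _ f] ns
    by (simp add: comp_def)
  have "tri_form_nn M (\<lambda>x1 x2 x3. m x3 x2 x1) F3 F2 F1
      = (\<integral>\<^sup>+pq. f (neg_sum (fst pq) (snd pq)) (snd pq) \<partial>(ZR M \<Otimes>\<^sub>M ZR M))"
    unfolding tri_form_nn_def f_def
    by (intro nn_integral_cong) (simp add: on_Gamma3_def mult_ac)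
  also have "\<dots> = (\<integral>\<^sup>+q. \<integral>\<^sup>+p. f (neg_sum p q) q \<partial>ZR M \<partial>ZR M)"
    using nn_integral_snd[OF f'] by simp
  also have "\<dots> = (\<integral>\<^sup>+q. \<integral>\<^sup>+p. f p q \<partial>ZR M \<partial>ZR M)"
  proof (rule nn_integral_cong)
    fix q assume q: "q \<in> space (ZR M)"
    have "(\<lambda>p. f p q) \<in> borel_measurable (ZR M)" using measurable_Pair1[OF f q] by simp
    then show "(\<integral>\<^sup>+p. f (neg_sum p q) q \<partial>ZR M) = (\<integral>\<^sup>+p. f p q \<partial>ZR M)"
      by (rule nn_integral_ZR_neg_sum[OF M q])
  qed
  also have "\<dots> = tri_form_nn M m F1 F2 F3"
    unfolding tri_form_nn_def using nn_integral_snd[OF f] by (simp add: f_def on_Gamma3_def)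
  finally show ?thesis .
qed

lemma mult_norm3_nn_swap12:
  assumes M: "Z_measure M" and m: "on_Gamma3 m \<in> borel_measurable borel"
  shows "mult_norm3_nn M (\<lambda>x1 x2 x3. m x2 x1 x3) = mult_norm3_nn M m"
proof -
  have le: "mult_norm3_nn M (\<lambda>x1 x2 x3. m' x2 x1 x3) \<le> mult_norm3_nn M m'"
    if m': "on_Gamma3 m' \<in> borel_measurable borel" for m'
  proof (rule mult_norm3_nn_leI)
    fix F1 F2 F3 assume F: "F1 \<in> L2_unit_ball_nn M" "F2 \<in> L2_unit_ball_nn M" "F3 \<in> L2_unit_ball_nn M"
    then have "tri_form_nn M (\<lambda>x1 x2 x3. m' x2 x1 x3) F1 F2 F3 = tri_form_nn M m' F2 F1 F3"
      by (intro tri_form_nn_swap12[OF M m']) (auto simp: L2_unit_ball_nn_def)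
    also have "\<dots> \<le> mult_norm3_nn M m'" using F by (intro tri_form_nn_le_mult_norm3_nn)
    finally show "tri_form_nn M (\<lambda>x1 x2 x3. m' x2 x1 x3) F1 F2 F3 \<le> mult_norm3_nn M m'" .
  qed
  show ?thesis using le[OF m] le[OF borel_measurable_on_Gamma3_swap12[OF m]] by (rule antisym)
qed

lemma mult_norm3_nn_swap13:
  assumes M: "Z_measure M" and m: "on_Gamma3 m \<in> borel_measurable borel"
  shows "mult_norm3_nn M (\<lambda>x1 x2 x3. m x3 x2 x1) = mult_norm3_nn M m"
proof -
  have le: "mult_norm3_nn M (\<lambda>x1 x2 x3. m' x3 x2 x1) \<le> mult_norm3_nn M m'"
    if m': "on_Gamma3 m' \<in> borel_measurable borel" for m'
  proof (rule mult_norm3_nn_leI)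
    fix F1 F2 F3 assume F: "F1 \<in> L2_unit_ball_nn M" "F2 \<in> L2_unit_ball_nn M" "F3 \<in> L2_unit_ball_nn M"
    then have "tri_form_nn M (\<lambda>x1 x2 x3. m' x3 x2 x1) F1 F2 F3 = tri_form_nn M m' F3 F2 F1"
      by (intro tri_form_nn_swap13[OF M m']) (auto simp: L2_unit_ball_nn_def)
    also have "\<dots> \<le> mult_norm3_nn M m'" using F by (intro tri_form_nn_le_mult_norm3_nn)
    finally show "tri_form_nn M (\<lambda>x1 x2 x3. m' x3 x2 x1) F1 F2 F3 \<le> mult_norm3_nn M m'" .
  qed
  show ?thesis using le[OF m] le[OF borel_measurable_on_Gamma3_swap13[OF m]] by (rule antisym)
qed

section \<open>Fibres of the KdV multiplier\<close>

lemma count_space_Ints_neq_lborel: "count_space (\<int> :: real set) \<noteq> lborel"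
proof
  assume "count_space (\<int> :: real set) = lborel"
  then have "space (count_space \<int>) = space (lborel :: real measure)" by simp
  then have "(1 / 2 :: real) \<in> \<int>" by simp
  then obtain k :: int where "1 / 2 = real_of_int k" by (auto elim: Ints_cases)
  then have "1 = 2 * k" by linarith
  then show False by presburger
qed

definition interval_slack :: "real measure \<Rightarrow> real" where
  "interval_slack M = (if M = lborel then 0 else 1)"

lemma interval_slack_nonneg: "0 \<le> interval_slack M"
  unfolding interval_slack_def by simp

lemma real_card_Icc_Ints_le:
  fixes u v :: real
  assumes "u \<le> v"
  shows "finite ({u..v} \<inter> \<int>)" "real (card ({u..v} \<inter> \<int>)) \<le> v - u + 1"
proof -
  have eq: "{u..v} \<inter> \<int> = of_int ` {\<lceil>u\<rceil>..\<lfloor>v\<rfloor>}"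
    by (auto elim!: Ints_cases simp: ceiling_le_iff le_floor_iff)
  show "finite ({u..v} \<inter> \<int>)" unfolding eq by simp
  have "card ({u..v} \<inter> \<int>) = nat (\<lfloor>v\<rfloor> - \<lceil>u\<rceil> + 1)"
    unfolding eq by (simp add: card_image inj_on_def)
  moreover have "real_of_int \<lfloor>v\<rfloor> - real_of_int \<lceil>u\<rceil> \<le> v - u"
    using of_int_floor_le[of v] le_of_int_ceiling[of u] by linarith
  ultimately show "real (card ({u..v} \<inter> \<int>)) \<le> v - u + 1"
    using assms by (cases "\<lfloor>v\<rfloor> - \<lceil>u\<rceil> + 1 \<ge> 0") auto
qed

lemma nn_integral_indicator_Icc_le:
  assumes M: "Z_measure M" and uv: "u \<le> v"
  shows "(\<integral>\<^sup>+x. indicator {u..v} x \<partial>M) \<le> ennreal (v - u + interval_slack M)"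
  using M
proof (cases rule: Z_measure_cases)
  case lborel
  then show ?thesis using uv by (simp add: interval_slack_def)
next
  case Ints
  have "(\<integral>\<^sup>+x. indicator {u..v} x \<partial>M) = (\<integral>\<^sup>+x. indicator ({u..v} \<inter> \<int>) x \<partial>count_space \<int>)"
    unfolding Ints by (rule nn_integral_cong) (auto simp: indicator_def)
  also have "\<dots> = emeasure (count_space \<int>) ({u..v} \<inter> \<int>)"
    by (rule nn_integral_indicator) auto
  also have "\<dots> = ennreal (real (card ({u..v} \<inter> \<int>)))"
    using real_card_Icc_Ints_le(1)[OF uv] by (simp add: emeasure_count_space_finite ennreal_of_nat_eq_real_of_nat)
  also have "\<dots> \<le> ennreal (v - u + interval_slack M)"
    using real_card_Icc_Ints_le(2)[OF uv] Ints count_space_Ints_neq_lborel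
    by (auto simp: interval_slack_def intro: ennreal_leI)
  finally show ?thesis .
qed

abbreviation cube :: "real \<Rightarrow> real" where
  "cube \<equiv> \<lambda>x. x ^ 3"

lemma borel_measurable_on_Gamma3_Xmult:
  "on_Gamma3 (Xmult c cube cube cube N1 N2 N3 H L1 L2 L3) \<in> borel_measurable borel"
  unfolding on_Gamma3_def Xmult_def ann_def neg_sum_def borel_prod[symmetric] by measurable

lemma Xmult_le_1: "Xmult c h1 h2 h3 N1 N2 N3 H L1 L2 L3 x1 x2 x3 \<le> 1"
  and Xmult_nonneg: "0 \<le> Xmult c h1 h2 h3 N1 N2 N3 H L1 L2 L3 x1 x2 x3"
  unfolding Xmult_def by auto

lemma Xmult_swap12:
  "(\<lambda>x1 x2 x3. Xmult c h1 h2 h3 N1 N2 N3 H L1 L2 L3 x2 x1 x3) = Xmult c h2 h1 h3 N2 N1 N3 H L2 L1 L3"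
  unfolding Xmult_def by (intro ext) (simp add: ac_simps conj_ac)

lemma Xmult_swap13:
  "(\<lambda>x1 x2 x3. Xmult c h1 h2 h3 N1 N2 N3 H L1 L2 L3 x3 x2 x1) = Xmult c h3 h2 h1 N3 N2 N1 H L3 L2 L1"
  unfolding Xmult_def by (intro ext) (simp add: ac_simps conj_ac)

text \<open>\<open>resonant c N\<^sub>2 N\<^sub>3 L\<^sub>2 L\<^sub>3 a l x\<close>: the frequency \<open>\<xi>\<^sub>2 = x\<close> can occur in the support of
  the multiplier above \<open>(\<xi>\<^sub>1, \<tau>\<^sub>1) = (a, a\<^sup>3 + l)\<close>; the resonance function
  \<open>h = -(\<lambda>\<^sub>1 + \<lambda>\<^sub>2 + \<lambda>\<^sub>3)\<close> must then be within \<open>c (L\<^sub>2 + L\<^sub>3)\<close> of \<open>-l\<close>.\<close>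
definition resonant :: "real \<Rightarrow> real \<Rightarrow> real \<Rightarrow> real \<Rightarrow> real \<Rightarrow> real \<Rightarrow> real \<Rightarrow> real \<Rightarrow> bool" where
  "resonant c N2 N3 L2 L3 a l x \<longleftrightarrow> ann c N2 x \<and> ann c N3 (- a - x)
     \<and> \<bar>a ^ 3 + x ^ 3 + (- a - x) ^ 3 + l\<bar> \<le> c * (L2 + L3)"

text \<open>The resonance function is symmetric about \<open>x = -a/2\<close>; a fibre width \<open>w\<close> bounds the diameter
  of the resonant set on either side of this point.\<close>
definition fiber_width :: "real \<Rightarrow> real \<Rightarrow> real \<Rightarrow> real \<Rightarrow> real \<Rightarrow> real \<Rightarrow> real \<Rightarrow> bool" where
  "fiber_width c N1 N2 N3 L2 L3 w \<longleftrightarrow> (\<forall>a l x y. ann c N1 a \<longrightarrow> resonant c N2 N3 L2 L3 a l x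
     \<longrightarrow> resonant c N2 N3 L2 L3 a l y \<longrightarrow> 0 \<le> (x + a / 2) * (y + a / 2) \<longrightarrow> \<bar>x - y\<bar> \<le> w)"

lemma Xmult_nonzero_imp:
  assumes "Xmult c cube cube cube N1 N2 N3 H L1 L2 L3 p (x, y) (neg_sum p (x, y)) \<noteq> 0"
  shows "ann c N1 (fst p)" "resonant c N2 N3 L2 L3 (fst p) (snd p - fst p ^ 3) x"
    "\<bar>y - x ^ 3\<bar> \<le> c * L2" "\<bar>y - (- snd p - (- fst p - x) ^ 3)\<bar> \<le> c * L3"
proof -
  obtain a t where p: "p = (a, t)" by (cases p)
  have X: "ann c N1 a" "ann c N2 x" "ann c N3 (- a - x)" "ann c L2 (y - x ^ 3)"
     "ann c L3 (- t - y - (- a - x) ^ 3)"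
    using assms unfolding Xmult_def p neg_sum_def by (auto split: if_splits)
  then have mod_bounds: "\<bar>y - x ^ 3\<bar> \<le> c * L2" "\<bar>- t - y - (- a - x) ^ 3\<bar> \<le> c * L3"
    unfolding ann_def by auto
  have "a ^ 3 + x ^ 3 + (- a - x) ^ 3 + (t - a ^ 3) = - ((y - x ^ 3) + (- t - y - (- a - x) ^ 3))"
    by (simp add: algebra_simps)
  then have "\<bar>a ^ 3 + x ^ 3 + (- a - x) ^ 3 + (t - a ^ 3)\<bar> \<le> c * (L2 + L3)"
    using mod_bounds by (simp add: distrib_left abs_le_iff)
  then show "ann c N1 (fst p)" "resonant c N2 N3 L2 L3 (fst p) (snd p - fst p ^ 3) x"
    "\<bar>y - x ^ 3\<bar> \<le> c * L2" "\<bar>y - (- snd p - (- fst p - x) ^ 3)\<bar> \<le> c * L3"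
    using X mod_bounds unfolding resonant_def p by (simp_all add: abs_le_iff)
qed

lemma nn_integral_lborel_le_of_support:
  assumes "\<And>y. g y \<le> 1" "\<And>y. g y \<noteq> 0 \<Longrightarrow> \<bar>y - ctr\<bar> \<le> r" "0 \<le> r"
  shows "(\<integral>\<^sup>+y. ennreal (g y) \<partial>lborel) \<le> ennreal (2 * r)"
proof -
  have "(\<integral>\<^sup>+y. ennreal (g y) \<partial>lborel) \<le> (\<integral>\<^sup>+y. indicator {ctr - r..ctr + r} y \<partial>lborel)"
  proof (rule nn_integral_mono)
    fix y show "ennreal (g y) \<le> indicator {ctr - r..ctr + r} y"
      using assms(1,2)[of y] by (cases "g y = 0") (auto simp: indicator_def abs_le_iff)
  qed
  also have "\<dots> = ennreal (2 * r)" using assms(3) by simp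
  finally show ?thesis .
qed

lemma nn_integral_Xmult_tau_le:
  assumes c: "c > 0" and L: "L2 > 0" "L3 > 0"
  shows "(\<integral>\<^sup>+y. ennreal (Xmult c cube cube cube N1 N2 N3 H L1 L2 L3 p (x, y) (neg_sum p (x, y))) \<partial>lborel)
    \<le> ennreal (2 * c * min L2 L3) * indicator {x. resonant c N2 N3 L2 L3 (fst p) (snd p - fst p ^ 3) x} x"
proof (cases "resonant c N2 N3 L2 L3 (fst p) (snd p - fst p ^ 3) x")
  case True
  let ?X = "\<lambda>y. Xmult c cube cube cube N1 N2 N3 H L1 L2 L3 p (x, y) (neg_sum p (x, y))"
  have "(\<integral>\<^sup>+y. ennreal (?X y) \<partial>lborel) \<le> ennreal (2 * (c * L2))"
    using c L Xmult_nonzero_imp(3)[of c N1 N2 N3 H L1 L2 L3 p x]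
    by (intro nn_integral_lborel_le_of_support[where ctr="x ^ 3"] Xmult_le_1) auto
  moreover have "(\<integral>\<^sup>+y. ennreal (?X y) \<partial>lborel) \<le> ennreal (2 * (c * L3))"
    using c L Xmult_nonzero_imp(4)[of c N1 N2 N3 H L1 L2 L3 p x]
    by (intro nn_integral_lborel_le_of_support[where ctr="- snd p - (- fst p - x) ^ 3"] Xmult_le_1) auto
  ultimately show ?thesis using True by (simp add: min_def mult.assoc)
next
  case False
  then have "Xmult c cube cube cube N1 N2 N3 H L1 L2 L3 p (x, y) (neg_sum p (x, y)) = 0" for y
    using Xmult_nonzero_imp(2) by blast
  then show ?thesis by simp
qed

lemma bounded_diameter_subset_Icc:
  fixes S :: "real set"
  assumes "\<And>x y. x \<in> S \<Longrightarrow> y \<in> S \<Longrightarrow> \<bar>x - y\<bar> \<le> w"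
  shows "\<exists>u. S \<subseteq> {u..u + 2 * w}"
proof (cases "S = {}")
  case False
  then obtain x0 where "x0 \<in> S" by auto
  then have "S \<subseteq> {x0 - w..x0 - w + 2 * w}" using assms[of x0] by (force simp: abs_le_iff)
  then show ?thesis by blast
qed simp

lemma nn_integral_resonant_le:
  assumes M: "Z_measure M" and w: "fiber_width c N1 N2 N3 L2 L3 w" "0 \<le> w" and a: "ann c N1 a"
  shows "(\<integral>\<^sup>+x. indicator {x. resonant c N2 N3 L2 L3 a l x} x \<partial>M)
    \<le> ennreal (2 * (2 * w + interval_slack M))"
proof -
  define E where "E = {x. resonant c N2 N3 L2 L3 a l x}"
  have diam: "\<bar>x - y\<bar> \<le> w" if "x \<in> E" "y \<in> E" "0 \<le> (x + a / 2) * (y + a / 2)" for x y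
    using w(1) a that unfolding fiber_width_def E_def by blast
  have "\<exists>u. E \<inter> {x. 0 \<le> x + a / 2} \<subseteq> {u..u + 2 * w}"
    by (rule bounded_diameter_subset_Icc) (auto intro: diam)
  then obtain u1 where u1: "E \<inter> {x. 0 \<le> x + a / 2} \<subseteq> {u1..u1 + 2 * w}" ..
  have "\<exists>u. E \<inter> {x. x + a / 2 \<le> 0} \<subseteq> {u..u + 2 * w}"
    by (rule bounded_diameter_subset_Icc) (auto intro: diam mult_nonpos_nonpos)
  then obtain u2 where u2: "E \<inter> {x. x + a / 2 \<le> 0} \<subseteq> {u2..u2 + 2 * w}" ..
  have cover: "indicator E x \<le> (indicator {u1..u1 + 2 * w} x + indicator {u2..u2 + 2 * w} x :: ennreal)" for x
  proof (cases "x \<in> E")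
    case True
    then have "x \<in> E \<inter> {x. 0 \<le> x + a / 2} \<or> x \<in> E \<inter> {x. x + a / 2 \<le> 0}" by auto
    then have "x \<in> {u1..u1 + 2 * w} \<or> x \<in> {u2..u2 + 2 * w}" using u1 u2 by blast
    then show ?thesis by (auto simp: indicator_def)
  qed simp
  have "(\<integral>\<^sup>+x. indicator E x \<partial>M)
      \<le> (\<integral>\<^sup>+x. indicator {u1..u1 + 2 * w} x + indicator {u2..u2 + 2 * w} x \<partial>M)"
    by (intro nn_integral_mono cover)
  also have "\<dots> = (\<integral>\<^sup>+x. indicator {u1..u1 + 2 * w} x \<partial>M) + (\<integral>\<^sup>+x. indicator {u2..u2 + 2 * w} x \<partial>M)"
    by (intro nn_integral_add borel_measurable_Z_measure[OF M]) auto
  also have "\<dots> \<le> ennreal (2 * w + interval_slack M) + ennreal (2 * w + interval_slack M)"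
    using w(2) by (intro add_mono order_trans[OF nn_integral_indicator_Icc_le[OF M]]) auto
  also have "\<dots> = ennreal (2 * (2 * w + interval_slack M))"
    using w(2) interval_slack_nonneg[of M] by (simp add: ennreal_plus[symmetric] del: ennreal_plus)
  finally show ?thesis unfolding E_def .
qed

lemma sets_borel_resonant: "{x. resonant c N2 N3 L2 L3 a l x} \<in> sets borel"
  unfolding resonant_def ann_def by measurable

lemma nn_integral_Xmult_fiber_le:
  assumes M: "Z_measure M" and c: "c > 0" and L: "L2 > 0" "L3 > 0"
    and w: "fiber_width c N1 N2 N3 L2 L3 w" "0 \<le> w" and p: "p \<in> space (ZR M)"
  shows "(\<integral>\<^sup>+q. ennreal (on_Gamma3 (Xmult c cube cube cube N1 N2 N3 H L1 L2 L3) (p, q)) \<partial>ZR M)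
    \<le> ennreal (4 * c * min L2 L3 * (2 * w + interval_slack M))"
proof (cases "ann c N1 (fst p)")
  case False
  then have "on_Gamma3 (Xmult c cube cube cube N1 N2 N3 H L1 L2 L3) (p, q) = 0" for q
    by (cases q) (auto simp: on_Gamma3_def dest: Xmult_nonzero_imp(1))
  then show ?thesis by simp
next
  case True
  let ?X = "\<lambda>q. ennreal (on_Gamma3 (Xmult c cube cube cube N1 N2 N3 H L1 L2 L3) (p, q))"
  let ?E = "{x. resonant c N2 N3 L2 L3 (fst p) (snd p - fst p ^ 3) x}"
  have "(\<lambda>pq. ennreal (on_Gamma3 (Xmult c cube cube cube N1 N2 N3 H L1 L2 L3) pq))
      \<in> borel_measurable (ZR M \<Otimes>\<^sub>M ZR M)"
    using measurable_ZR_ZR_of_borel[OF M borel_measurable_on_Gamma3_Xmult] by measurable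
  from measurable_Pair2[OF this p] have X: "?X \<in> borel_measurable (M \<Otimes>\<^sub>M lborel)"
    unfolding ZR_def by simp
  have "(\<integral>\<^sup>+q. ?X q \<partial>ZR M) = (\<integral>\<^sup>+x. \<integral>\<^sup>+y. ?X (x, y) \<partial>lborel \<partial>M)"
    unfolding ZR_def using lborel.nn_integral_fst[OF X] by simp
  also have "\<dots> \<le> (\<integral>\<^sup>+x. ennreal (2 * c * min L2 L3) * indicator ?E x \<partial>M)"
    using nn_integral_Xmult_tau_le[OF c L] by (intro nn_integral_mono) (simp add: on_Gamma3_def)
  also have "\<dots> = ennreal (2 * c * min L2 L3) * (\<integral>\<^sup>+x. indicator ?E x \<partial>M)"
    using sets_borel_resonant by (intro nn_integral_cmult borel_measurable_Z_measure[OF M]) auto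
  also have "\<dots> \<le> ennreal (2 * c * min L2 L3) * ennreal (2 * (2 * w + interval_slack M))"
    by (intro mult_left_mono nn_integral_resonant_le[OF M w True]) auto
  also have "\<dots> = ennreal (4 * c * min L2 L3 * (2 * w + interval_slack M))"
    using c L by (simp add: ennreal_mult'[symmetric] algebra_simps)
  finally show ?thesis .
qed

definition kdv_norm :: "real measure \<Rightarrow> real \<Rightarrow> real \<Rightarrow> real \<Rightarrow> real \<Rightarrow> real \<Rightarrow> real \<Rightarrow> real \<Rightarrow> real \<Rightarrow> ennreal" where
  "kdv_norm M c N1 N2 N3 H L1 L2 L3 = mult_norm3_nn M (Xmult c cube cube cube N1 N2 N3 H L1 L2 L3)"

lemma mult_norm3_Xmult_le_kdv_norm:
  "mult_norm3 M (Xmult c cube cube cube N1 N2 N3 H L1 L2 L3) \<le> kdv_norm M c N1 N2 N3 H L1 L2 L3"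
  unfolding kdv_norm_def by (rule mult_norm3_le_mult_norm3_nn) (rule Xmult_nonneg)

lemma kdv_norm_le_fiber_width:
  assumes M: "Z_measure M" and c: "c > 0" and L: "L2 > 0" "L3 > 0"
    and w: "fiber_width c N1 N2 N3 L2 L3 w" "0 < w"
  shows "kdv_norm M c N1 N2 N3 H L1 L2 L3 \<le> ennreal (sqrt (4 * c * min L2 L3 * (2 * w + interval_slack M)))"
  unfolding kdv_norm_def
proof (rule mult_norm3_nn_le_sqrt_fiber[OF M borel_measurable_on_Gamma3_Xmult])
  show "on_Gamma3 (Xmult c cube cube cube N1 N2 N3 H L1 L2 L3) pq \<le> 1" for pq
    unfolding on_Gamma3_def by (rule Xmult_le_1)
  show "0 < 4 * c * min L2 L3 * (2 * w + interval_slack M)"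
    using c L w(2) interval_slack_nonneg[of M] by simp
qed (use nn_integral_Xmult_fiber_le[OF M c L w(1) less_imp_le[OF w(2)]] in simp)

lemma kdv_norm_swap12:
  assumes "Z_measure M"
  shows "kdv_norm M c N2 N1 N3 H L2 L1 L3 = kdv_norm M c N1 N2 N3 H L1 L2 L3"
  using mult_norm3_nn_swap12[OF assms borel_measurable_on_Gamma3_Xmult, of c N1 N2 N3 H L1 L2 L3]
  unfolding kdv_norm_def Xmult_swap12 .

lemma kdv_norm_swap13:
  assumes "Z_measure M"
  shows "kdv_norm M c N3 N2 N1 H L3 L2 L1 = kdv_norm M c N1 N2 N3 H L1 L2 L3"
  using mult_norm3_nn_swap13[OF assms borel_measurable_on_Gamma3_Xmult, of c N1 N2 N3 H L1 L2 L3]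
  unfolding kdv_norm_def Xmult_swap13 .

lemma kdv_norm_swap23:
  "Z_measure M \<Longrightarrow> kdv_norm M c N1 N3 N2 H L1 L3 L2 = kdv_norm M c N1 N2 N3 H L1 L2 L3"
  using kdv_norm_swap12[of M c N3 N1 N2] kdv_norm_swap13[of M c N2 N1 N3] kdv_norm_swap12[of M c N1 N2 N3]
  by simp

lemma resonance_difference:
  assumes x: "resonant c N2 N3 L2 L3 a l x" and y: "resonant c N2 N3 L2 L3 a l y"
    and side: "0 \<le> (x + a / 2) * (y + a / 2)"
  shows "3 * \<bar>a\<bar> * \<bar>x - y\<bar> * \<bar>x + y + a\<bar> \<le> 2 * c * (L2 + L3)"
    and "\<bar>x + y + a\<bar> = \<bar>x + a / 2\<bar> + \<bar>y + a / 2\<bar>"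
    and "\<bar>x - y\<bar> \<le> \<bar>x + y + a\<bar>"
proof -
  have "(a ^ 3 + x ^ 3 + (- a - x) ^ 3) - (a ^ 3 + y ^ 3 + (- a - y) ^ 3) = - 3 * a * (x - y) * (x + y + a)"
    by (simp add: algebra_simps power3_eq_cube)
  moreover have "\<bar>(a ^ 3 + x ^ 3 + (- a - x) ^ 3) - (a ^ 3 + y ^ 3 + (- a - y) ^ 3)\<bar> \<le> 2 * c * (L2 + L3)"
    using x y unfolding resonant_def by (simp add: abs_le_iff)
  ultimately show "3 * \<bar>a\<bar> * \<bar>x - y\<bar> * \<bar>x + y + a\<bar> \<le> 2 * c * (L2 + L3)"
    by (simp add: abs_mult)
  have "x + y + a = (x + a / 2) + (y + a / 2)" by simp
  then show sum: "\<bar>x + y + a\<bar> = \<bar>x + a / 2\<bar> + \<bar>y + a / 2\<bar>"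
    using side by (cases "x + a / 2 \<ge> 0"; cases "y + a / 2 \<ge> 0") (auto simp: zero_le_mult_iff)
  have "x - y = (x + a / 2) - (y + a / 2)" by simp
  then show "\<bar>x - y\<bar> \<le> \<bar>x + y + a\<bar>" unfolding sum by linarith
qed

lemma fiber_width_trivial: "c > 0 \<Longrightarrow> fiber_width c N1 N2 N3 L2 L3 (2 * c * N2)"
  unfolding fiber_width_def resonant_def ann_def by (auto simp: abs_le_iff)

lemma fiber_width_quadratic:
  assumes c: "c > 0" and N1: "N1 > 0"
  shows "fiber_width c N1 N2 N3 L2 L3 (sqrt (2 * c\<^sup>2 * (L2 + L3) / (3 * N1)))"
  unfolding fiber_width_def
proof (intro allI impI)
  fix a l x y assume a: "ann c N1 a" and xy: "resonant c N2 N3 L2 L3 a l x" "resonant c N2 N3 L2 L3 a l y"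
    and side: "0 \<le> (x + a / 2) * (y + a / 2)"
  have "N1 / c \<le> \<bar>a\<bar>" using a unfolding ann_def by simp
  then have "3 * (N1 / c) * \<bar>x - y\<bar> * \<bar>x - y\<bar> \<le> 3 * \<bar>a\<bar> * \<bar>x - y\<bar> * \<bar>x + y + a\<bar>"
    using resonance_difference(3)[OF xy side] c N1 by (intro mult_mono) auto
  then have "3 * (N1 / c) * \<bar>x - y\<bar>\<^sup>2 \<le> 2 * c * (L2 + L3)"
    using resonance_difference(1)[OF xy side] by (simp add: power2_eq_square mult.assoc)
  then have "\<bar>x - y\<bar>\<^sup>2 \<le> 2 * c\<^sup>2 * (L2 + L3) / (3 * N1)"
    using c N1 by (simp add: field_simps power2_eq_square)
  then show "\<bar>x - y\<bar> \<le> sqrt (2 * c\<^sup>2 * (L2 + L3) / (3 * N1))"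
    using real_le_rsqrt by blast
qed

lemma fiber_width_dispersive:
  assumes c: "c > 0" and N1: "N1 > 0" and R: "R > 0"
    and away: "\<And>a x. ann c N1 a \<Longrightarrow> ann c N2 x \<Longrightarrow> ann c N3 (- a - x) \<Longrightarrow> R \<le> \<bar>x + a / 2\<bar>"
  shows "fiber_width c N1 N2 N3 L2 L3 (c\<^sup>2 * (L2 + L3) / (3 * N1 * R))"
  unfolding fiber_width_def
proof (intro allI impI)
  fix a l x y assume a: "ann c N1 a" and xy: "resonant c N2 N3 L2 L3 a l x" "resonant c N2 N3 L2 L3 a l y"
    and side: "0 \<le> (x + a / 2) * (y + a / 2)"
  have "R \<le> \<bar>x + a / 2\<bar>" "R \<le> \<bar>y + a / 2\<bar>"
    using xy away[OF a] unfolding resonant_def by auto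
  then have "2 * R \<le> \<bar>x + y + a\<bar>" unfolding resonance_difference(2)[OF xy side] by simp
  moreover have "N1 / c \<le> \<bar>a\<bar>" using a unfolding ann_def by simp
  ultimately have "3 * (N1 / c) * \<bar>x - y\<bar> * (2 * R) \<le> 3 * \<bar>a\<bar> * \<bar>x - y\<bar> * \<bar>x + y + a\<bar>"
    using c N1 R by (intro mult_mono) auto
  then have "3 * (N1 / c) * \<bar>x - y\<bar> * (2 * R) \<le> 2 * c * (L2 + L3)"
    using resonance_difference(1)[OF xy side] by linarith
  then show "\<bar>x - y\<bar> \<le> c\<^sup>2 * (L2 + L3) / (3 * N1 * R)"
    using c N1 R by (simp add: field_simps power2_eq_square)
qed

lemma ann_abs_add_half_ge1: "c > 0 \<Longrightarrow> ann c N1 a \<Longrightarrow> ann c N2 x \<Longrightarrow> N2 / c - c * N1 / 2 \<le> \<bar>x + a / 2\<bar>"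
  unfolding ann_def by (auto simp: abs_le_iff abs_if split: if_splits)

lemma ann_abs_add_half_ge2:
  "c > 0 \<Longrightarrow> ann c N2 x \<Longrightarrow> ann c N3 (- a - x) \<Longrightarrow> (N3 / c - c * N2) / 2 \<le> \<bar>x + a / 2\<bar>"
  unfolding ann_def by (auto simp: abs_le_iff abs_if split: if_splits)

text \<open>\<open>br\<close> is the weight \<open>\<langle>\<cdot>\<rangle>\<^sub>Z\<close> of the paper for the measure \<open>M\<close> on \<open>Z\<close>.\<close>
definition Z_bracket :: "real measure \<Rightarrow> (real \<Rightarrow> real) \<Rightarrow> bool" where
  "Z_bracket M br \<longleftrightarrow> (M = lborel \<and> br = abs) \<or> (M = count_space \<int> \<and> br = (\<lambda>x. 1 + \<bar>x\<bar>))"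

lemma Z_bracket_Z_measure: "Z_bracket M br \<Longrightarrow> Z_measure M"
  unfolding Z_bracket_def Z_measure_def by auto

lemma Z_bracket_nonneg: "Z_bracket M br \<Longrightarrow> 0 \<le> br x"
  unfolding Z_bracket_def by auto

lemma Z_bracket_square_ge: "Z_bracket M br \<Longrightarrow> x\<^sup>2 + interval_slack M \<le> (br x)\<^sup>2"
  unfolding Z_bracket_def interval_slack_def using count_space_Ints_neq_lborel
  by (auto simp: power2_eq_square algebra_simps)

lemma kdv_norm_le_bracket:
  assumes Z: "Z_bracket M br" and c: "c > 0" and L: "L2 > 0" "L3 > 0"
    and w: "fiber_width c N1 N2 N3 L2 L3 w" "0 < w"
    and k: "1 \<le> k" and Lm: "min L2 L3 \<le> k * Lm" and X: "w \<le> k * X\<^sup>2"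
  shows "kdv_norm M c N1 N2 N3 H L1 L2 L3 \<le> ennreal (sqrt (8 * c) * k * sqrt Lm * br X)"
proof -
  let ?s = "interval_slack M"
  have s: "0 \<le> ?s" by (rule interval_slack_nonneg)
  have "0 < k * Lm" using Lm L by linarith
  then have Lm0: "0 < Lm" using k by (simp add: zero_less_mult_iff)
  have "2 * w + ?s \<le> 2 * k * (X\<^sup>2 + ?s)"
    using X k s mult_right_mono[OF k s] by (simp add: algebra_simps)
  also have "\<dots> \<le> 2 * k * (br X)\<^sup>2"
    using Z_bracket_square_ge[OF Z] k by simp
  finally have "4 * c * min L2 L3 * (2 * w + ?s) \<le> 4 * c * (k * Lm) * (2 * k * (br X)\<^sup>2)"
    using c L Lm w(2) s by (intro mult_mono) auto
  also have "\<dots> = (sqrt (8 * c) * k * sqrt Lm * br X)\<^sup>2"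
    using c Lm0 k Z_bracket_nonneg[OF Z] by (simp add: power_mult_distrib power2_eq_square algebra_simps)
  finally have "sqrt (4 * c * min L2 L3 * (2 * w + ?s)) \<le> sqrt (8 * c) * k * sqrt Lm * br X"
    using c Lm0 k Z_bracket_nonneg[OF Z, of X] by (simp add: real_le_lsqrt)
  with kdv_norm_le_fiber_width[OF Z_bracket_Z_measure[OF Z] c L w] show ?thesis
    by (meson ennreal_leI order_trans)
qed

lemma kdv_norm_le_bracket_powr:
  assumes "Z_bracket M br" "c > 0" "L2 > 0" "L3 > 0" "fiber_width c N1 N2 N3 L2 L3 w" "0 < w"
    "1 \<le> k" "min L2 L3 \<le> k * Lm" "w * Nm\<^sup>2 \<le> k * Y" "Nm > 0" "Y \<ge> 0"
  shows "kdv_norm M c N1 N2 N3 H L1 L2 L3 \<le> ennreal (sqrt (8 * c) * k * sqrt Lm * br (Nm powr -1 * sqrt Y))"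
proof (rule kdv_norm_le_bracket[OF assms(1-8)])
  show "w \<le> k * (Nm powr -1 * sqrt Y)\<^sup>2"
    using assms(9-11) by (simp add: powr_minus power_mult_distrib field_simps)
qed

section \<open>Symmetry reductions\<close>

lemma max3_swap12: "max3 b a c = max3 a b c" and max3_swap23: "max3 a c b = max3 a b c"
  unfolding max3_def by linarith+

lemma min3_swap12: "min3 b a c = min3 a b c" and min3_swap23: "min3 a c b = min3 a b c"
  unfolding min3_def by linarith+

lemma med3_swap12: "med3 b a c = med3 a b c" and med3_swap23: "med3 a c b = med3 a b c"
  unfolding med3_def by (simp_all add: max3_swap12 max3_swap23 min3_swap12 min3_swap23 algebra_simps)

lemma max3_ge: "a \<le> max3 a b c" "b \<le> max3 a b c" "c \<le> max3 a b c"
  and min3_le: "min3 a b c \<le> a" "min3 a b c \<le> b" "min3 a b c \<le> c"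
  unfolding max3_def min3_def by auto

lemma med3_ge_min: "min a b \<le> med3 a b c" "min a c \<le> med3 a b c"
  unfolding med3_def max3_def min3_def by (auto simp: max_def min_def)

lemma max3_med3_min3_first_largest:
  fixes a b c :: real
  assumes "b \<le> a" "c \<le> a"
  shows "max3 a b c = a" "med3 a b c = max b c" "min3 a b c = min b c"
  using assms unfolding max3_def med3_def min3_def by auto

lemma max3_med3_min3_prod: "max3 a b c * med3 a b c * min3 a b c = a * b * c" for a b c :: real
  unfolding max3_def med3_def min3_def
  by (cases "a \<le> b"; cases "b \<le> c"; cases "a \<le> c") (simp_all add: max_def min_def algebra_simps)

lemma std_hyp_swap12: "std_hyp C0 N2 N1 N3 H L2 L1 L3 = std_hyp C0 N1 N2 N3 H L1 L2 L3"
  and std_hyp_swap23: "std_hyp C0 N1 N3 N2 H L1 L3 L2 = std_hyp C0 N1 N2 N3 H L1 L2 L3"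
  unfolding std_hyp_def by (auto simp: max3_swap12 min3_swap12 med3_swap12 max3_swap23 min3_swap23
    med3_swap23 mult_ac)

lemma std_hypD:
  assumes "std_hyp C0 N1 N2 N3 H L1 L2 L3"
  shows "0 < N1" "0 < N2" "0 < N3" "0 < H" "0 < L1" "0 < L2" "0 < L3"
    "max3 N1 N2 N3 \<le> C0 * med3 N1 N2 N3"
    "max3 L1 L2 L3 \<le> C0 * max H (med3 L1 L2 L3)" "max H (med3 L1 L2 L3) \<le> C0 * max3 L1 L2 L3"
    "N1 * N2 * N3 \<le> C0 * H"
  using assms unfolding std_hyp_def sim_def by auto

lemma std_hyp_min3_max3_sq_le:
  assumes std: "std_hyp C0 N1 N2 N3 H L1 L2 L3" and C0: "1 \<le> C0"
  shows "min3 N1 N2 N3 * (max3 N1 N2 N3)\<^sup>2 \<le> C0\<^sup>2 * H"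
proof -
  have pos: "0 < min3 N1 N2 N3" "0 < max3 N1 N2 N3"
    using std_hypD(1-3)[OF std] unfolding min3_def max3_def by auto
  have "min3 N1 N2 N3 * (max3 N1 N2 N3)\<^sup>2 \<le> min3 N1 N2 N3 * max3 N1 N2 N3 * (C0 * med3 N1 N2 N3)"
    using std_hypD(8)[OF std] pos by (simp add: power2_eq_square mult_left_mono)
  also have "\<dots> = C0 * (N1 * N2 * N3)"
    using max3_med3_min3_prod[of N1 N2 N3] by (simp add: mult_ac)
  also have "\<dots> \<le> C0\<^sup>2 * H"
    using std_hypD(11)[OF std] C0 by (simp add: power2_eq_square mult_left_mono mult.assoc)
  finally show ?thesis .
qed

lemma case_pp_swap12: "case_pp C N2 N1 N3 H L2 L1 L3 = case_pp C N1 N2 N3 H L1 L2 L3"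
  and case_pp_swap23: "case_pp C N1 N3 N2 H L1 L3 L2 = case_pp C N1 N2 N3 H L1 L2 L3"
  unfolding case_pp_def by (simp_all add: max3_swap12 min3_swap12 max3_swap23 min3_swap23)

lemma case_pm1_swap23: "case_pm1 C K N1 N3 N2 H L1 L3 L2 = case_pm1 C K N1 N2 N3 H L1 L2 L3"
  unfolding case_pm1_def sim_def by auto

lemma case_pm_swap12: "case_pm C K N2 N1 N3 H L2 L1 L3 = case_pm C K N1 N2 N3 H L1 L2 L3"
  and case_pm_swap23: "case_pm C K N1 N3 N2 H L1 L3 L2 = case_pm C K N1 N2 N3 H L1 L2 L3"
  unfolding case_pm_def by (auto simp: case_pm1_swap23)

lemma wlog_first_largest:
  fixes A P :: "real \<Rightarrow> real \<Rightarrow> real \<Rightarrow> real \<Rightarrow> real \<Rightarrow> real \<Rightarrow> bool"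
  assumes A: "A N1 N2 N3 L1 L2 L3"
    and A12: "\<And>N1 N2 N3 L1 L2 L3. A N1 N2 N3 L1 L2 L3 \<Longrightarrow> A N2 N1 N3 L2 L1 L3"
    and A23: "\<And>N1 N2 N3 L1 L2 L3. A N1 N2 N3 L1 L2 L3 \<Longrightarrow> A N1 N3 N2 L1 L3 L2"
    and P12: "\<And>N1 N2 N3 L1 L2 L3. P N1 N2 N3 L1 L2 L3 \<Longrightarrow> P N2 N1 N3 L2 L1 L3"
    and P23: "\<And>N1 N2 N3 L1 L2 L3. P N1 N2 N3 L1 L2 L3 \<Longrightarrow> P N1 N3 N2 L1 L3 L2"
    and largest: "\<And>N1 N2 N3 L1 L2 L3. A N1 N2 N3 L1 L2 L3 \<Longrightarrow> L2 \<le> L1 \<Longrightarrow> L3 \<le> L1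
      \<Longrightarrow> P N1 N2 N3 L1 L2 L3"
  shows "P N1 N2 N3 L1 L2 L3"
proof -
  have A': "A N2 N1 N3 L2 L1 L3" "A N3 N1 N2 L3 L1 L2"
    using A12[OF A] A23[OF A12[OF A23[OF A12[OF A]]]] by simp_all
  consider "L2 \<le> L1" "L3 \<le> L1" | "L1 \<le> L2" "L3 \<le> L2" | "L1 \<le> L3" "L2 \<le> L3" by linarith
  then show ?thesis
  proof cases
    case 1
    then show ?thesis by (rule largest[OF A])
  next
    case 2
    from P12[OF largest[OF A'(1) 2]] show ?thesis .
  next
    case 3
    from P23[OF P12[OF largest[OF A'(2) 3]]] show ?thesis .
  qed
qed

lemma wlog_distinguished:
  fixes A Q P :: "real \<Rightarrow> real \<Rightarrow> real \<Rightarrow> real \<Rightarrow> real \<Rightarrow> real \<Rightarrow> bool"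
  assumes A: "A N1 N2 N3 L1 L2 L3"
    and Q: "Q N1 N2 N3 L1 L2 L3 \<or> Q N2 N1 N3 L2 L1 L3 \<or> Q N3 N1 N2 L3 L1 L2"
    and A12: "\<And>N1 N2 N3 L1 L2 L3. A N1 N2 N3 L1 L2 L3 \<Longrightarrow> A N2 N1 N3 L2 L1 L3"
    and A23: "\<And>N1 N2 N3 L1 L2 L3. A N1 N2 N3 L1 L2 L3 \<Longrightarrow> A N1 N3 N2 L1 L3 L2"
    and P12: "\<And>N1 N2 N3 L1 L2 L3. P N1 N2 N3 L1 L2 L3 \<Longrightarrow> P N2 N1 N3 L2 L1 L3"
    and P23: "\<And>N1 N2 N3 L1 L2 L3. P N1 N2 N3 L1 L2 L3 \<Longrightarrow> P N1 N3 N2 L1 L3 L2"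
    and first: "\<And>N1 N2 N3 L1 L2 L3. A N1 N2 N3 L1 L2 L3 \<Longrightarrow> Q N1 N2 N3 L1 L2 L3 \<Longrightarrow> P N1 N2 N3 L1 L2 L3"
  shows "P N1 N2 N3 L1 L2 L3"
proof -
  have A': "A N2 N1 N3 L2 L1 L3" "A N3 N1 N2 L3 L1 L2"
    using A12[OF A] A23[OF A12[OF A23[OF A12[OF A]]]] by simp_all
  show ?thesis
    using Q first[OF A] P12[OF first[OF A'(1)]] P23[OF P12[OF first[OF A'(2)]]] by blast
qed

section \<open>The three regimes\<close>

lemma powr_quarter_square:
  assumes "0 < a" "0 < b"
  shows "(a powr (-1/4) * b powr (1/4))\<^sup>2 = sqrt (b / a)"
proof -
  have "(a powr (-1/4) * b powr (1/4))\<^sup>2 = a powr (-1/2) * b powr (1/2)"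
    by (simp add: power2_eq_square powr_add[symmetric] algebra_simps)
  also have "\<dots> = sqrt b / sqrt a"
    using assms by (simp add: powr_minus_divide powr_half_sqrt)
  finally show ?thesis by (simp add: real_sqrt_divide)
qed

lemma kdv_norm_coherent_pp_first_largest:
  assumes Z: "Z_bracket M br" and c: "1 \<le> c" and C1: "1 \<le> C1"
    and N: "0 < N1" "0 < N2" "0 < N3" "max3 N1 N2 N3 \<le> C1 * min3 N1 N2 N3"
    and L: "0 < L2" "0 < L3" "L2 \<le> L1" "L3 \<le> L1"
  shows "kdv_norm M c N1 N2 N3 H L1 L2 L3 \<le> ennreal (sqrt (8 * c) * (2 * c * C1) * sqrt (min3 L1 L2 L3)
    * br (max3 N1 N2 N3 powr (-1/4) * med3 L1 L2 L3 powr (1/4)))"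
proof -
  define Nm Ld where "Nm = max3 N1 N2 N3" and "Ld = max L2 L3"
  have Ld: "med3 L1 L2 L3 = Ld" "min3 L1 L2 L3 = min L2 L3"
    using max3_med3_min3_first_largest[OF L(3,4)] by (simp_all add: Ld_def)
  have pos: "0 < Nm" "0 < Ld" using N L max3_ge[of N1 N2 N3] unfolding Nm_def Ld_def by auto
  have Nm: "Nm \<le> C1 * N1"
    using N(4) min3_le(1)[of N1 N2 N3] C1 unfolding Nm_def by (meson mult_left_mono order_trans zero_le_one le_trans)
  have "1 * 1 \<le> c * C1" using c C1 by (intro mult_mono) auto
  then have k: "1 \<le> 2 * c * C1" by simp
  define w where "w = sqrt (2 * c\<^sup>2 * (L2 + L3) / (3 * N1))"
  have "2 * c\<^sup>2 * (L2 + L3) * Nm \<le> 2 * c\<^sup>2 * (2 * Ld) * (C1 * N1)"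
    using Nm pos L unfolding Ld_def by (intro mult_mono) auto
  also have "\<dots> \<le> (2 * c * C1)\<^sup>2 * Ld * (3 * N1)"
    using C1 c pos N mult_right_mono[of C1 "3 * C1\<^sup>2" "4 * c\<^sup>2 * Ld * N1"]
    by (simp add: power2_eq_square algebra_simps)
  finally have "2 * c\<^sup>2 * (L2 + L3) / (3 * N1) \<le> (2 * c * C1)\<^sup>2 * (Ld / Nm)"
    using pos N by (simp add: field_simps)
  then have "w \<le> sqrt ((2 * c * C1)\<^sup>2 * (Ld / Nm))" unfolding w_def by (rule real_sqrt_le_mono)
  also have "\<dots> = 2 * c * C1 * sqrt (Ld / Nm)"
    using c C1 by (simp only: real_sqrt_mult real_sqrt_abs) simp
  finally have "w \<le> 2 * c * C1 * (Nm powr (-1/4) * Ld powr (1/4))\<^sup>2"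
    using powr_quarter_square[OF pos] by simp
  moreover have "min L2 L3 \<le> 2 * c * C1 * min L2 L3"
    using L mult_right_mono[OF k, of "min L2 L3"] by simp
  ultimately show ?thesis
    unfolding Ld(2) Ld(1)[symmetric] Nm_def
    using c N(1) L(1,2) k
    by (intro kdv_norm_le_bracket[OF Z _ L(1,2) fiber_width_quadratic]) (auto simp: w_def)
qed

lemma kdv_norm_coherent_pp:
  assumes Z: "Z_bracket M br" and c: "1 \<le> c" and C1: "1 \<le> C1"
    and std: "std_hyp C0 N1 N2 N3 H L1 L2 L3" and pp: "case_pp C1 N1 N2 N3 H L1 L2 L3"
  shows "kdv_norm M c N1 N2 N3 H L1 L2 L3 \<le> ennreal (sqrt (8 * c) * (2 * c * C1) * sqrt (min3 L1 L2 L3)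
    * br (max3 N1 N2 N3 powr (-1/4) * med3 L1 L2 L3 powr (1/4)))" (is "?P N1 N2 N3 L1 L2 L3")
proof (rule wlog_first_largest[where P = ?P and
    A = "\<lambda>N1 N2 N3 L1 L2 L3. std_hyp C0 N1 N2 N3 H L1 L2 L3 \<and> case_pp C1 N1 N2 N3 H L1 L2 L3"])
  fix N1 N2 N3 L1 L2 L3 :: real
  assume "std_hyp C0 N1 N2 N3 H L1 L2 L3 \<and> case_pp C1 N1 N2 N3 H L1 L2 L3" "L2 \<le> L1" "L3 \<le> L1"
  then show "?P N1 N2 N3 L1 L2 L3"
    unfolding std_hyp_def case_pp_def sim_def by (blast intro: kdv_norm_coherent_pp_first_largest[OF Z c C1])
qed (use std pp Z_bracket_Z_measure[OF Z] in \<open>simp_all add: kdv_norm_swap12 kdv_norm_swap23 std_hyp_swap12 std_hyp_swap23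
      case_pp_swap12 case_pp_swap23 max3_swap12 max3_swap23 min3_swap12 min3_swap23 med3_swap12 med3_swap23\<close>)

lemma pm_constant_ge:
  fixes c C0 C1 :: real
  assumes c: "1 \<le> c" and C0: "1 \<le> C0" and C1: "1 \<le> C1"
  shows "2 * c * C0 * C1 \<le> 2 * c ^ 3 * C0 * C1\<^sup>2" "C1 \<le> 2 * c ^ 3 * C0 * C1\<^sup>2" "1 \<le> 2 * c ^ 3 * C0 * C1\<^sup>2"
proof -
  have "2 * c * C0 * C1 * 1 \<le> 2 * c * C0 * C1 * (c\<^sup>2 * C1)"
    using mult_mono[OF one_le_power[OF c, of 2] C1] c C0 C1 by (intro mult_left_mono) auto
  then show ge: "2 * c * C0 * C1 \<le> 2 * c ^ 3 * C0 * C1\<^sup>2"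
    by (simp add: power2_eq_square power3_eq_cube mult_ac)
  have "1 * C1 \<le> (2 * c * C0) * C1"
    using mult_mono[OF c C0] c C1 by (intro mult_right_mono) auto
  then show "C1 \<le> 2 * c ^ 3 * C0 * C1\<^sup>2" "1 \<le> 2 * c ^ 3 * C0 * C1\<^sup>2"
    using ge C1 by linarith+
qed

text \<open>Since \<open>N\<^sub>1 \<ll> N\<^sub>2\<close>, the frequency \<open>\<xi>\<^sub>2\<close> stays at distance \<open>\<greatersim> N\<^sub>2\<close> from \<open>-\<xi>\<^sub>1/2\<close>.\<close>
lemma kdv_norm_pm1_dispersive:
  assumes Z: "Z_bracket M br" and c: "1 \<le> c" and C0: "1 \<le> C0" and C1: "1 \<le> C1"
    and pos: "0 < N1" "0 < N2" "0 < N3" "0 < L2" "0 < L3"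
    and N: "c\<^sup>2 * N1 \<le> N2" "0 < Nm" "Nm \<le> C1 * N2"
    and L: "0 < Ld" "L2 \<le> C1 * Ld" "L3 \<le> C1 * Ld" "min L2 L3 \<le> C1 * Lm"
  shows "kdv_norm M c N1 N2 N3 H L1 L2 L3 \<le> ennreal (sqrt (8 * c) * (2 * c ^ 3 * C0 * C1\<^sup>2)
    * sqrt Lm * br (Nm powr (-1) * sqrt (Nm / N1 * Ld)))"
proof -
  define k R w where "k = 2 * c ^ 3 * C0 * C1\<^sup>2" and "R = N2 / (2 * c)"
    and "w = c\<^sup>2 * (L2 + L3) / (3 * N1 * R)"
  note k = pm_constant_ge[OF c C0 C1, folded k_def]
  have away: "R \<le> \<bar>x + a / 2\<bar>" if "ann c N1 a" "ann c N2 x" for a x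
  proof -
    have "c * N1 \<le> N2 / c" using N(1) c by (simp add: field_simps power2_eq_square)
    then show ?thesis using ann_abs_add_half_ge1[OF _ that] c unfolding R_def by (simp add: field_simps)
  qed
  have fw: "fiber_width c N1 N2 N3 L2 L3 w"
    unfolding w_def using c pos by (intro fiber_width_dispersive away) (auto simp: R_def)
  have "2 * c ^ 3 * (L2 + L3) * Nm \<le> 2 * c ^ 3 * (2 * C1 * Ld) * (C1 * N2)"
    using L N c pos by (intro mult_mono) auto
  also have "\<dots> = 4 * (c ^ 3 * C1\<^sup>2 * Ld * N2)" by (simp add: power2_eq_square mult_ac)
  also have "\<dots> \<le> 6 * C0 * (c ^ 3 * C1\<^sup>2 * Ld * N2)"
    using C0 c L pos by (intro mult_right_mono) auto
  also have "\<dots> = 3 * k * Ld * N2" by (simp add: k_def mult_ac)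
  finally have "(2 * c ^ 3 * (L2 + L3) * Nm) * (Nm / (3 * N1 * N2)) \<le> (3 * k * Ld * N2) * (Nm / (3 * N1 * N2))"
    using pos N(2) by (intro mult_right_mono) auto
  then have wNm: "w * Nm\<^sup>2 \<le> k * (Nm / N1 * Ld)"
    using c pos unfolding w_def R_def by (simp add: field_simps power2_eq_square power3_eq_cube)
  have "0 < C1 * Lm" using L(4) pos by linarith
  then have "0 < Lm" using C1 by (simp add: zero_less_mult_iff)
  then have "C1 * Lm \<le> k * Lm" using k(2) by (simp add: mult_right_mono)
  with L(4) have Lm: "min L2 L3 \<le> k * Lm" by linarith
  have "0 < w" "0 \<le> Nm / N1 * Ld" unfolding w_def R_def using c pos N(2) L(1) by simp_all
  from kdv_norm_le_bracket_powr[OF Z _ pos(4,5) fw this(1) k(3) Lm wNm N(2) this(2)] c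
  show ?thesis unfolding k_def by simp
qed

text \<open>If \<open>H \<le> N\<^sub>m\<^sub>a\<^sub>x L\<^sub>m\<^sub>e\<^sub>d / N\<^sub>1\<close>, freeze \<open>\<xi>\<^sub>2\<close> and use the trivial width \<open>2 c N\<^sub>1\<close> of the fibre in
  \<open>\<xi>\<^sub>1\<close>; otherwise freeze \<open>\<xi>\<^sub>1\<close> and use the dispersive width.\<close>
lemma kdv_norm_coherent_pm1_ordered:
  assumes Z: "Z_bracket M br" and c: "1 \<le> c" and C0: "1 \<le> C0" and C1: "1 \<le> C1"
    and pos: "0 < N1" "0 < N2" "0 < N3" "0 < H" "0 < L1" "0 < L2" "0 < L3"
    and H: "N1 * N2 * N3 \<le> C0 * H" and pm: "case_pm1 C1 (c\<^sup>2) N1 N2 N3 H L1 L2 L3" and L: "L3 \<le> L2"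
  shows "kdv_norm M c N1 N2 N3 H L1 L2 L3 \<le> ennreal (sqrt (8 * c) * (2 * c ^ 3 * C0 * C1\<^sup>2)
    * sqrt (min3 L1 L2 L3) * br (max3 N1 N2 N3 powr (-1)
      * sqrt (min H (max3 N1 N2 N3 / min3 N1 N2 N3 * med3 L1 L2 L3))))"
proof -
  define k Nm Ld Lm where "k = 2 * c ^ 3 * C0 * C1\<^sup>2" and "Nm = max N2 N3"
    and "Ld = med3 L1 L2 L3" and "Lm = min L1 L3"
  note k = pm_constant_ge[OF c C0 C1, folded k_def]
  have pm': "N2 \<le> C1 * N3" "N3 \<le> C1 * N2" "c\<^sup>2 * N1 \<le> N2" "c\<^sup>2 * N1 \<le> N3" "L2 \<le> C1 * L1" "L3 \<le> C1 * L1"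
    using pm unfolding case_pm1_def sim_def by auto
  have "N1 \<le> N2" "N1 \<le> N3"
    using pm'(3,4) mult_right_mono[OF one_le_power[OF c, of 2], of N1] pos by linarith+
  then have eqs: "max3 N1 N2 N3 = Nm" "min3 N1 N2 N3 = N1" "min3 L1 L2 L3 = Lm"
    using L unfolding Nm_def Lm_def max3_def min3_def by auto
  have Nm: "0 < Nm" "Nm \<le> C1 * N2" "Nm\<^sup>2 \<le> C1 * (N2 * N3)"
    using pos pm'(1,2) C1 mult_right_mono[OF C1, of N2] unfolding Nm_def
    by (auto simp: power2_eq_square max_def mult_ac intro: mult_left_mono)
  have "L2 \<le> C1 * min L1 L2" "L3 \<le> C1 * min L1 L3"
    using pm'(5,6) mult_right_mono[OF C1, of L2] mult_right_mono[OF C1, of L3] pos by (simp_all add: min_def)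
  moreover have Ld_min: "min L1 L2 \<le> Ld" "min L1 L3 \<le> Ld" using med3_ge_min unfolding Ld_def by auto
  then have "C1 * min L1 L2 \<le> C1 * Ld" "C1 * min L1 L3 \<le> C1 * Ld"
    using C1 by (simp_all add: mult_left_mono)
  moreover have "min L2 L3 \<le> C1 * Lm"
    using L pm'(6) pos mult_right_mono[OF C1, of L3] unfolding Lm_def by (simp add: min_def)
  ultimately have Ld: "0 < Ld" "L2 \<le> C1 * Ld" "L3 \<le> C1 * Ld" and Lm: "min L2 L3 \<le> C1 * Lm"
    using Ld_min pos by auto
  show ?thesis
  proof (cases "H \<le> Nm / N1 * Ld")
    case True
    have "2 * c * N1 * Nm\<^sup>2 \<le> 2 * c * C1 * (N1 * N2 * N3)"
      using Nm(3) c pos by (simp add: mult_left_mono mult_ac)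
    also have "\<dots> \<le> 2 * c * C1 * (C0 * H)" using H c C1 by (intro mult_left_mono) auto
    also have "\<dots> \<le> k * H" using k(1) pos by (simp add: mult_right_mono mult_ac)
    finally have "kdv_norm M c N2 N1 N3 H L2 L1 L3 \<le> ennreal (sqrt (8 * c) * k * sqrt Lm
        * br (Nm powr (-1) * sqrt H))"
      using c pos k(3) Nm(1) L unfolding Lm_def
      by (intro kdv_norm_le_bracket_powr[OF Z _ _ _ fiber_width_trivial]) (auto simp: min_def)
    then show ?thesis using True kdv_norm_swap12[OF Z_bracket_Z_measure[OF Z]] unfolding eqs Ld_def k_def
      by simp
  next
    case False
    then show ?thesis
      using kdv_norm_pm1_dispersive[OF Z c C0 C1 pos(1-3,6,7) pm'(3) Nm(1,2) Ld Lm]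
      unfolding eqs Ld_def by (simp add: min_absorb2)
  qed
qed

lemma kdv_norm_coherent_pm:
  assumes Z: "Z_bracket M br" and c: "1 \<le> c" and C0: "1 \<le> C0" and C1: "1 \<le> C1"
    and std: "std_hyp C0 N1 N2 N3 H L1 L2 L3" and pm: "case_pm C1 (c\<^sup>2) N1 N2 N3 H L1 L2 L3"
  shows "kdv_norm M c N1 N2 N3 H L1 L2 L3 \<le> ennreal (sqrt (8 * c) * (2 * c ^ 3 * C0 * C1\<^sup>2)
    * sqrt (min3 L1 L2 L3) * br (max3 N1 N2 N3 powr (-1)
      * sqrt (min H (max3 N1 N2 N3 / min3 N1 N2 N3 * med3 L1 L2 L3))))" (is "?P N1 N2 N3 L1 L2 L3")
proof (rule wlog_distinguished[where P = ?P and A = "\<lambda>N1 N2 N3 L1 L2 L3. std_hyp C0 N1 N2 N3 H L1 L2 L3"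
    and Q = "\<lambda>N1 N2 N3 L1 L2 L3. case_pm1 C1 (c\<^sup>2) N1 N2 N3 H L1 L2 L3"])
  have M: "Z_measure M" by (rule Z_bracket_Z_measure[OF Z])
  fix N1 N2 N3 L1 L2 L3 :: real
  assume std: "std_hyp C0 N1 N2 N3 H L1 L2 L3" and pm: "case_pm1 C1 (c\<^sup>2) N1 N2 N3 H L1 L2 L3"
  show "?P N1 N2 N3 L1 L2 L3"
  proof (cases "L3 \<le> L2")
    case True
    show ?thesis
      by (rule kdv_norm_coherent_pm1_ordered[OF Z c C0 C1 std_hypD(1-7,11)[OF std] pm True])
  next
    case False
    have std': "std_hyp C0 N1 N3 N2 H L1 L3 L2" and pm': "case_pm1 C1 (c\<^sup>2) N1 N3 N2 H L1 L3 L2"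
      using std pm by (simp_all add: std_hyp_swap23 case_pm1_swap23)
    have "?P N1 N3 N2 L1 L3 L2"
      using False by (intro kdv_norm_coherent_pm1_ordered[OF Z c C0 C1 std_hypD(1-7,11)[OF std'] pm']) simp
    then show ?thesis by (simp add: kdv_norm_swap23[OF M] max3_swap23 min3_swap23 med3_swap23)
  qed
qed (use std pm Z_bracket_Z_measure[OF Z] in \<open>simp_all add: case_pm_def kdv_norm_swap12 kdv_norm_swap23
  std_hyp_swap12 std_hyp_swap23 max3_swap12 max3_swap23 min3_swap12 min3_swap23 med3_swap12 med3_swap23\<close>)

lemma kdv_norm_first_largest_trivial:
  assumes Z: "Z_bracket M br" and c: "0 < c" and k: "1 \<le> k"
    and L: "0 < L2" "0 < L3" "L2 \<le> L1" "L3 \<le> L1" and N: "0 < N1" "0 < Nm" "0 \<le> H"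
    and w: "2 * c * N1 * Nm\<^sup>2 \<le> k * H"
  shows "kdv_norm M c N1 N2 N3 H L1 L2 L3 \<le> ennreal (sqrt (8 * c) * k * sqrt (min L2 L3)
    * br (Nm powr (-1) * sqrt H))"
proof -
  have M: "Z_measure M" by (rule Z_bracket_Z_measure[OF Z])
  have Lm: "min L2 L3 \<le> k * min L2 L3" using k L mult_right_mono[OF k, of "min L2 L3"] by simp
  show ?thesis
  proof (cases "L3 \<le> L2")
    case True
    have "kdv_norm M c N2 N1 N3 H L2 L1 L3 \<le> ennreal (sqrt (8 * c) * k * sqrt (min L2 L3)
      * br (Nm powr (-1) * sqrt H))"
      using True L Lm c N by (intro kdv_norm_le_bracket_powr[OF Z c _ L(2) fiber_width_trivial[OF c] _ k _ w N(2,3)])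
        (auto simp: min_def)
    then show ?thesis by (simp add: kdv_norm_swap12[OF M])
  next
    case False
    have "kdv_norm M c N3 N1 N2 H L3 L1 L2 \<le> ennreal (sqrt (8 * c) * k * sqrt (min L2 L3)
      * br (Nm powr (-1) * sqrt H))"
      using False L Lm c N by (intro kdv_norm_le_bracket_powr[OF Z c _ L(1) fiber_width_trivial[OF c] _ k _ w N(2,3)])
        (auto simp: min_def)
    then show ?thesis
      using kdv_norm_swap23[OF M, of c N3 N2 N1 H L3 L2 L1] kdv_norm_swap13[OF M, of c N1 N2 N3 H L1 L2 L3]
      by simp
  qed
qed

lemma kdv_norm_generic_dispersive:
  assumes Z: "Z_bracket M br" and c: "1 \<le> c" and C0: "1 \<le> C0"
    and pos: "0 < N1" "0 < N2" "0 < N3" "0 < L2" "0 < L3"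
    and N: "Nm \<le> C0 * N1" "Nm \<le> C0 * N3" "2 * c\<^sup>2 * C0 * N2 < Nm"
  shows "kdv_norm M c N1 N2 N3 H L1 L2 L3 \<le> ennreal (sqrt (8 * c) * (8 * c ^ 3 * C0 ^ 3)
    * sqrt (min L2 L3) * br (Nm powr (-1) * sqrt (max L2 L3)))"
proof -
  define k R w where "k = 8 * c ^ 3 * C0 ^ 3" and "R = Nm / (4 * c * C0)"
    and "w = c\<^sup>2 * (L2 + L3) / (3 * N1 * R)"
  have "0 < 2 * c\<^sup>2 * C0 * N2" using c C0 pos by simp
  then have Nm: "0 < Nm" using N(3) by linarith
  have away: "R \<le> \<bar>x + a / 2\<bar>" if "ann c N2 x" "ann c N3 (- a - x)" for a x
  proof -
    have "Nm / (c * C0) \<le> N3 / c" using N(2) c C0 by (simp add: field_simps)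
    moreover have "c * N2 \<le> Nm / (2 * c * C0)" using N(3) c C0 by (simp add: field_simps power2_eq_square)
    ultimately have "R \<le> (N3 / c - c * N2) / 2" unfolding R_def using c C0 by (simp add: field_simps)
    then show ?thesis using ann_abs_add_half_ge2[OF _ that] c by linarith
  qed
  have fw: "fiber_width c N1 N2 N3 L2 L3 w"
    unfolding w_def using c C0 pos Nm by (intro fiber_width_dispersive away) (auto simp: R_def)
  have "w * Nm\<^sup>2 = 4 * c ^ 3 * C0 * (L2 + L3) * Nm / (3 * N1)"
    unfolding w_def R_def using c C0 pos Nm by (simp add: field_simps power2_eq_square power3_eq_cube)
  also have "\<dots> \<le> 4 * c ^ 3 * C0 * (2 * max L2 L3) * (C0 * N1) / (3 * N1)"
    using N(1) c C0 pos Nm by (intro divide_right_mono mult_mono) auto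
  also have "\<dots> = 8 * c ^ 3 * C0\<^sup>2 * max L2 L3 / 3"
    using pos by (simp add: power2_eq_square)
  also have "\<dots> \<le> 8 * c ^ 3 * C0\<^sup>2 * max L2 L3" using c pos by simp
  also have "\<dots> \<le> k * max L2 L3"
    unfolding k_def using power_increasing[of 2 3 C0] c C0 pos by (intro mult_right_mono) auto
  finally have wNm: "w * Nm\<^sup>2 \<le> k * max L2 L3" .
  have "1 * 1 \<le> c ^ 3 * C0 ^ 3" using c C0 by (intro mult_mono one_le_power) auto
  then have k: "1 \<le> k" unfolding k_def by simp
  have "min L2 L3 \<le> k * min L2 L3" using k pos mult_right_mono[OF k, of "min L2 L3"] by simp
  moreover have "0 < w" unfolding w_def R_def using c C0 pos Nm by simp
  ultimately show ?thesis
    using c pos Nm unfolding k_def[symmetric]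
    by (intro kdv_norm_le_bracket_powr[OF Z _ _ _ fw _ k _ wNm]) auto
qed

text \<open>When \<open>H\<close> exceeds \<open>L\<^sub>m\<^sub>e\<^sub>d\<close>, the standing hypotheses force \<open>L\<^sub>m\<^sub>a\<^sub>x \<sim> H\<close>, so both coherent cases can only
  fail because of the frequencies.\<close>
lemma generic_low_modulation_config:
  assumes c: "1 \<le> c" and C0: "1 \<le> C0" and std: "std_hyp C0 N1 N2 N3 H L1 L2 L3"
    and npp: "\<not> case_pp (2 * c\<^sup>2 * C0) N1 N2 N3 H L1 L2 L3"
    and npm: "\<not> case_pm1 (2 * c\<^sup>2 * C0) 1 N1 N2 N3 H L1 L2 L3"
    and L: "L2 \<le> L1" "L3 \<le> L1" and N: "N2 \<le> N3" and low: "max L2 L3 < H"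
  shows "2 * c\<^sup>2 * C0 * min3 N1 N2 N3 < max3 N1 N2 N3" "N2 \<le> N1"
proof -
  define A where "A = 2 * c\<^sup>2 * C0"
  have "1 \<le> c\<^sup>2" using c by (simp add: one_le_power)
  then have "C0 * 1 \<le> C0 * (2 * c\<^sup>2)" using C0 by (intro mult_left_mono) auto
  then have "C0 \<le> A" unfolding A_def by (simp add: mult_ac)
  then have A: "C0 \<le> A" "1 \<le> A" using C0 by linarith+
  have Lmax: "max3 L1 L2 L3 = L1" "med3 L1 L2 L3 = max L2 L3"
    using max3_med3_min3_first_largest[OF L] by simp_all
  have "L1 \<le> C0 * H" "H \<le> C0 * L1" using std_hypD(9,10)[OF std] low unfolding Lmax by auto
  moreover have "C0 * H \<le> A * H" "C0 * L1 \<le> A * L1"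
    using A(1) std_hypD(4,5)[OF std] by (simp_all add: mult_right_mono)
  ultimately have LH: "sim A L1 H" "sim A H L1" unfolding sim_def by linarith+
  have "\<not> sim A (max3 N1 N2 N3) (min3 N1 N2 N3)"
    using npp LH unfolding case_pp_def Lmax A_def by simp
  moreover have "1 * max3 N1 N2 N3 \<le> A * max3 N1 N2 N3"
    using A std_hypD(1)[OF std] max3_ge(1)[of N1 N2 N3] by (intro mult_right_mono) auto
  ultimately show "A * min3 N1 N2 N3 < max3 N1 N2 N3"
    using min3_le(1)[of N1 N2 N3] max3_ge(1)[of N1 N2 N3] unfolding sim_def by linarith
  show "N2 \<le> N1"
  proof (rule ccontr)
    assume "\<not> N2 \<le> N1"
    then have "max3 N1 N2 N3 = N3" "med3 N1 N2 N3 = N2"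
      using N unfolding max3_def med3_def min3_def by (auto simp: max_def min_def)
    moreover have "C0 * N2 \<le> A * N2" using A(1) std_hypD(2)[OF std] by (simp add: mult_right_mono)
    ultimately have "N3 \<le> A * N2" using std_hypD(8)[OF std] by simp
    moreover have "1 * N3 \<le> A * N3" "1 * L1 \<le> A * L1"
      using A(2) std_hypD(3,5)[OF std] by (simp_all add: mult_right_mono)
    then have "N2 \<le> A * N3" "L2 \<le> A * L1" "L3 \<le> A * L1" using N L by auto
    ultimately have "case_pm1 A 1 N1 N2 N3 H L1 L2 L3"
      using \<open>\<not> N2 \<le> N1\<close> N LH unfolding case_pm1_def sim_def by auto
    then show False using npm unfolding A_def by simp
  qed
qed

text \<open>If \<open>N\<^sub>2 \<lesssim> N\<^sub>m\<^sub>i\<^sub>n\<close>, freeze \<open>\<xi>\<^sub>1\<close>; otherwise \<open>N\<^sub>1 = N\<^sub>m\<^sub>i\<^sub>n\<close> and we freeze \<open>\<xi>\<^sub>2\<close> or \<open>\<xi>\<^sub>3\<close>.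
  Either way the trivial fibre width \<open>w\<close> satisfies \<open>w N\<^sub>m\<^sub>a\<^sub>x\<^sup>2 \<lesssim> N\<^sub>m\<^sub>i\<^sub>n N\<^sub>m\<^sub>a\<^sub>x\<^sup>2 \<lesssim> H\<close>.\<close>
lemma kdv_norm_generic_trivial:
  assumes Z: "Z_bracket M br" and c: "1 \<le> c" and C0: "1 \<le> C0" and std: "std_hyp C0 N1 N2 N3 H L1 L2 L3"
    and L: "L2 \<le> L1" "L3 \<le> L1" and N: "N2 \<le> N3"
  shows "kdv_norm M c N1 N2 N3 H L1 L2 L3 \<le> ennreal (sqrt (8 * c) * (8 * c ^ 3 * C0 ^ 3)
    * sqrt (min L2 L3) * br (max3 N1 N2 N3 powr (-1) * sqrt H))"
proof -
  define A k Nm Nn where "A = 2 * c\<^sup>2 * C0" and "k = 8 * c ^ 3 * C0 ^ 3"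
    and "Nm = max3 N1 N2 N3" and "Nn = min3 N1 N2 N3"
  note pos = std_hypD(1-7)[OF std]
  have Nm: "0 < Nm" using pos max3_ge(1)[of N1 N2 N3] unfolding Nm_def by linarith
  have "1 \<le> c\<^sup>2" using c by (simp add: one_le_power)
  then have A: "1 \<le> A" using C0 mult_mono[of 1 "2 * c\<^sup>2" 1 C0] unfolding A_def by simp
  have "2 * c * (A * Nn) * Nm\<^sup>2 = 2 * c * A * (Nn * Nm\<^sup>2)" by (simp add: mult_ac)
  also have "\<dots> \<le> 2 * c * A * (C0\<^sup>2 * H)"
    using std_hyp_min3_max3_sq_le[OF std C0] c A unfolding Nn_def Nm_def by (intro mult_left_mono) auto
  also have "\<dots> = k / 2 * H" unfolding A_def k_def by (simp add: power2_eq_square power3_eq_cube)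
  also have "\<dots> \<le> k * H" using pos c C0 unfolding k_def by simp
  finally have kH: "2 * c * (A * Nn) * Nm\<^sup>2 \<le> k * H" .
  have "1 * 1 \<le> c ^ 3 * C0 ^ 3" using c C0 by (intro mult_mono one_le_power) auto
  then have k: "1 \<le> k" unfolding k_def by simp
  have Lm: "min L2 L3 \<le> k * min L2 L3" using k pos mult_right_mono[OF k, of "min L2 L3"] by simp
  show ?thesis
    unfolding k_def[symmetric] Nm_def[symmetric]
  proof (cases "N2 \<le> A * Nn")
    case True
    have "2 * c * N2 * Nm\<^sup>2 \<le> 2 * c * (A * Nn) * Nm\<^sup>2"
      using True c by (intro mult_right_mono mult_left_mono) auto
    then have "2 * c * N2 * Nm\<^sup>2 \<le> k * H" using kH by linarith
    then show "kdv_norm M c N1 N2 N3 H L1 L2 L3 \<le> ennreal (sqrt (8 * c) * k * sqrt (min L2 L3)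
      * br (Nm powr (-1) * sqrt H))"
      using pos c k Nm Lm by (intro kdv_norm_le_bracket_powr[OF Z _ _ _ fiber_width_trivial]) auto
  next
    case False
    moreover have "1 * N2 \<le> A * N2" using A pos(2) by (intro mult_right_mono) auto
    ultimately have "Nn = N1" using N unfolding Nn_def min3_def by (auto simp: min_def split: if_splits)
    then have "2 * c * N1 * Nm\<^sup>2 \<le> 2 * c * (A * Nn) * Nm\<^sup>2"
      using A c pos by (intro mult_right_mono mult_left_mono) auto
    then have "2 * c * N1 * Nm\<^sup>2 \<le> k * H" using kH by linarith
    then show "kdv_norm M c N1 N2 N3 H L1 L2 L3 \<le> ennreal (sqrt (8 * c) * k * sqrt (min L2 L3)
      * br (Nm powr (-1) * sqrt H))"
      using pos Nm c k L by (intro kdv_norm_first_largest_trivial[OF Z]) auto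
  qed
qed

lemma kdv_norm_generic_ordered:
  assumes Z: "Z_bracket M br" and c: "1 \<le> c" and C0: "1 \<le> C0" and std: "std_hyp C0 N1 N2 N3 H L1 L2 L3"
    and npp: "\<not> case_pp (2 * c\<^sup>2 * C0) N1 N2 N3 H L1 L2 L3"
    and npm: "\<not> case_pm1 (2 * c\<^sup>2 * C0) 1 N1 N2 N3 H L1 L2 L3"
    and L: "L2 \<le> L1" "L3 \<le> L1" and N: "N2 \<le> N3"
  shows "kdv_norm M c N1 N2 N3 H L1 L2 L3 \<le> ennreal (sqrt (8 * c) * (8 * c ^ 3 * C0 ^ 3)
    * sqrt (min3 L1 L2 L3) * br (max3 N1 N2 N3 powr (-1) * sqrt (min H (med3 L1 L2 L3))))"
proof (cases "H \<le> max L2 L3")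
  case True
  then show ?thesis using kdv_norm_generic_trivial[OF Z c C0 std L N]
    by (simp add: max3_med3_min3_first_largest[OF L] min_absorb1)
next
  case False
  then have low: "max L2 L3 < H" by linarith
  note config = generic_low_modulation_config[OF c C0 std npp npm L N low]
  have "med3 N1 N2 N3 = min N1 N3"
    using config(2) N unfolding med3_def max3_def min3_def by (auto simp: max_def min_def)
  then have "max3 N1 N2 N3 \<le> C0 * min N1 N3" using std_hypD(8)[OF std] by simp
  moreover have "C0 * min N1 N3 \<le> C0 * N1" "C0 * min N1 N3 \<le> C0 * N3"
    using C0 by (simp_all add: mult_left_mono)
  moreover have "min3 N1 N2 N3 = N2" using config(2) N unfolding min3_def by auto
  ultimately show ?thesis
    using kdv_norm_generic_dispersive[OF Z c C0 std_hypD(1-3,6,7)[OF std], of "max3 N1 N2 N3"] config(1) low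
    by (simp add: max3_med3_min3_first_largest[OF L] min_absorb2)
qed

lemma kdv_norm_generic:
  assumes Z: "Z_bracket M br" and c: "1 \<le> c" and C0: "1 \<le> C0" and std: "std_hyp C0 N1 N2 N3 H L1 L2 L3"
    and npp: "\<not> case_pp (2 * c\<^sup>2 * C0) N1 N2 N3 H L1 L2 L3"
    and npm: "\<not> case_pm (2 * c\<^sup>2 * C0) 1 N1 N2 N3 H L1 L2 L3"
  shows "kdv_norm M c N1 N2 N3 H L1 L2 L3 \<le> ennreal (sqrt (8 * c) * (8 * c ^ 3 * C0 ^ 3)
    * sqrt (min3 L1 L2 L3) * br (max3 N1 N2 N3 powr (-1) * sqrt (min H (med3 L1 L2 L3))))"
    (is "?P N1 N2 N3 L1 L2 L3")
proof (rule wlog_first_largest[where P = ?P and A = "\<lambda>N1 N2 N3 L1 L2 L3. std_hyp C0 N1 N2 N3 H L1 L2 L3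
    \<and> \<not> case_pp (2 * c\<^sup>2 * C0) N1 N2 N3 H L1 L2 L3 \<and> \<not> case_pm (2 * c\<^sup>2 * C0) 1 N1 N2 N3 H L1 L2 L3"])
  have M: "Z_measure M" by (rule Z_bracket_Z_measure[OF Z])
  fix N1 N2 N3 L1 L2 L3 :: real
  assume A: "std_hyp C0 N1 N2 N3 H L1 L2 L3 \<and> \<not> case_pp (2 * c\<^sup>2 * C0) N1 N2 N3 H L1 L2 L3
    \<and> \<not> case_pm (2 * c\<^sup>2 * C0) 1 N1 N2 N3 H L1 L2 L3" and L: "L2 \<le> L1" "L3 \<le> L1"
  show "?P N1 N2 N3 L1 L2 L3"
  proof (cases "N2 \<le> N3")
    case True
    show ?thesis using A unfolding case_pm_def by (intro kdv_norm_generic_ordered[OF Z c C0 _ _ _ L True]) auto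
  next
    case False
    have "?P N1 N3 N2 L1 L3 L2"
      using A False L unfolding case_pm_def
      by (intro kdv_norm_generic_ordered[OF Z c C0]) (auto simp: std_hyp_swap23 case_pp_swap23 case_pm1_swap23)
    then show ?thesis by (simp add: kdv_norm_swap23[OF M] max3_swap23 min3_swap23 med3_swap23)
  qed
qed (use std npp npm Z_bracket_Z_measure[OF Z] in \<open>simp_all add: kdv_norm_swap12 kdv_norm_swap23
  std_hyp_swap12 std_hyp_swap23 case_pp_swap12 case_pp_swap23 case_pm_swap12 case_pm_swap23
  max3_swap12 max3_swap23 min3_swap12 min3_swap23 med3_swap12 med3_swap23\<close>)

theorem mainTheorem1:
  fixes M :: "real measure" and br :: "real \<Rightarrow> real" and c :: real
  assumes Z: "(M = lborel \<and> br = abs) \<or> (M = count_space \<int> \<and> br = (\<lambda>x. 1 + \<bar>x\<bar>))"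
    and c: "c > 1"
  shows "\<forall>C0\<ge>1.
    (\<forall>C1\<ge>1. \<exists>C>0. \<forall>N1 N2 N3 H L1 L2 L3.
        std_hyp C0 N1 N2 N3 H L1 L2 L3 \<and> case_pp C1 N1 N2 N3 H L1 L2 L3 \<longrightarrow>
        mult_norm3 M (Xmult c (\<lambda>x. x ^ 3) (\<lambda>x. x ^ 3) (\<lambda>x. x ^ 3) N1 N2 N3 H L1 L2 L3)
          \<le> ennreal (C * sqrt (min3 L1 L2 L3)
                 * br (max3 N1 N2 N3 powr (-1/4) * med3 L1 L2 L3 powr (1/4))))
  \<and> (\<forall>C1\<ge>1. \<exists>K\<ge>1. \<exists>C>0. \<forall>N1 N2 N3 H L1 L2 L3.
        std_hyp C0 N1 N2 N3 H L1 L2 L3 \<and> case_pm C1 K N1 N2 N3 H L1 L2 L3 \<longrightarrow>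
        mult_norm3 M (Xmult c (\<lambda>x. x ^ 3) (\<lambda>x. x ^ 3) (\<lambda>x. x ^ 3) N1 N2 N3 H L1 L2 L3)
          \<le> ennreal (C * sqrt (min3 L1 L2 L3)
                 * br (max3 N1 N2 N3 powr (-1)
                       * sqrt (min H (max3 N1 N2 N3 / min3 N1 N2 N3 * med3 L1 L2 L3)))))
  \<and> (\<exists>A\<ge>1. \<exists>K\<ge>1. \<exists>C>0. \<forall>N1 N2 N3 H L1 L2 L3.
        std_hyp C0 N1 N2 N3 H L1 L2 L3 \<and> \<not> case_pp A N1 N2 N3 H L1 L2 L3
          \<and> \<not> case_pm A K N1 N2 N3 H L1 L2 L3 \<longrightarrow>
        mult_norm3 M (Xmult c (\<lambda>x. x ^ 3) (\<lambda>x. x ^ 3) (\<lambda>x. x ^ 3) N1 N2 N3 H L1 L2 L3)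
          \<le> ennreal (C * sqrt (min3 L1 L2 L3)
                 * br (max3 N1 N2 N3 powr (-1) * sqrt (min H (med3 L1 L2 L3)))))"
proof (intro allI impI conjI, goal_cases)
  have Z': "Z_bracket M br" using Z unfolding Z_bracket_def .
  have c': "1 \<le> c" "1 \<le> c\<^sup>2" using c by (simp_all add: one_le_power)
  {
    case (1 C0 C1)
    show ?case
      using c 1 order_trans[OF mult_norm3_Xmult_le_kdv_norm kdv_norm_coherent_pp[OF Z' c'(1)]]
      by (intro exI[of _ "sqrt (8 * c) * (2 * c * C1)"]) auto
  next
    case (2 C0 C1)
    show ?case
      using c c' 2 order_trans[OF mult_norm3_Xmult_le_kdv_norm kdv_norm_coherent_pm[OF Z' c'(1)]]
      by (intro exI[of _ "c\<^sup>2"] conjI exI[of _ "sqrt (8 * c) * (2 * c ^ 3 * C0 * C1\<^sup>2)"]) auto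
  next
    case (3 C0)
    have "1 * 1 \<le> 2 * c\<^sup>2 * C0" using c'(2) 3 by (intro mult_mono) auto
    then show ?case
      using c 3 order_trans[OF mult_norm3_Xmult_le_kdv_norm kdv_norm_generic[OF Z' c'(1)]]
      by (intro exI[of _ "2 * c\<^sup>2 * C0"] conjI exI[of _ "1 :: real"] exI[of _ "sqrt (8 * c) * (8 * c ^ 3 * C0 ^ 3)"])
        auto
  }
qed

end
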